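(* Let $\mathcal{I} \in \mathrm{Ins}(\Omega,\mathcal{H},\mathcal{K})$ and $\mathcal{J} \in \mathrm{Ins}(\Lambda,\mathcal{H},\mathcal{V})$ be instruments such that the Lüders instruments $\mathcal{I}^{\mathsf{A}^{\mathcal{I}}}$ and $\mathcal{I}^{\mathsf{A}^{\mathcal{J}}}$ of their induced POVMs are compatible. Then $\mathcal{I}$ and $\mathcal{J}$ are compatible.
   Context: All Hilbert spaces are finite-dimensional and complex, and all outcome sets are finite. A POVM $\mathsf{A}\in\mathcal{O}(\Omega,\mathcal{H})$ is a map $x\mapsto \mathsf{A}(x)$ from $\Omega$ to positive operators on $\mathcal{H}$ with $\sum_x \mathsf{A}(x)=I$. An instrument $\mathcal{I}\in\mathrm{Ins}(\Omega,\mathcal{H},\mathcal{K})$ is a family $(\mathcal{I}_x)_{x\in\Omega}$ of completely positive trace-nonincreasing linear maps $\mathcal{L}(\mathcal{H})\to\mathcal{L}(\mathcal{K})$ whose sum is trace preserving; its induced POVM $\mathsf{A}^{\mathcal{I}}$ is defined by $\mathrm{tr}[\mathsf{A}^{\mathcal{I}}(x)\varrho]=\mathrm{tr}[\mathcal{I}_x(\varrho)]$. The Lüders instrument of a POVM $\mathsf{A}\in\mathcal{O}(\Omega,\mathcal{H})$ is $\mathcal{I}^{\mathsf{A}}\in\mathrm{Ins}(\Omega,\mathcal{H},\mathcal{H})$, $\mathcal{I}^{\mathsf{A}}_x(\varrho)=\sqrt{\mathsf{A}(x)}\varrho\sqrt{\mathsf{A}(x)}$. Two instruments $\mathcal{I}\in\mathrm{Ins}(\Omega,\mathcal{H},\mathcal{K})$,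 $\mathcal{J}\in\mathrm{Ins}(\Lambda,\mathcal{H},\mathcal{V})$ are compatible if there is $\mathcal{G}\in\mathrm{Ins}(\Omega\times\Lambda,\mathcal{H},\mathcal{K}\otimes\mathcal{V})$ with $\sum_{x}\mathrm{tr}_{\mathcal{K}}[\mathcal{G}_{(x,y)}(\varrho)]=\mathcal{J}_y(\varrho)$ for all $y$ and $\sum_y\mathrm{tr}_{\mathcal{V}}[\mathcal{G}_{(x,y)}(\varrho)]=\mathcal{I}_x(\varrho)$ for all $x$, for all states $\varrho$. *)

theory Defs
  imports Complex_Main
begin

text \<open>Finite-dimensional Hilbert space C^'a, with 'a a finite (nonempty) index type.
  Operators in L(C^'a) are represented by their matrices 'a \<Rightarrow> 'a \<Rightarrow> complex.
  Outcome sets are finite types; the tensor product C^'k (x) C^'v is C^('k \<times> 'v).\<close>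

type_synonym 'a op = "'a \<Rightarrow> 'a \<Rightarrow> complex"

definition mmult :: "('a::finite) op \<Rightarrow> 'a op \<Rightarrow> 'a op" where
  "mmult A B = (\<lambda>i j. \<Sum>k\<in>UNIV. A i k * B k j)"

definition mtrace :: "('a::finite) op \<Rightarrow> complex" where
  "mtrace A = (\<Sum>i\<in>UNIV. A i i)"

definition idop :: "'a op" where
  "idop = (\<lambda>i j. if i = j then 1 else 0)"

text \<open>Positivity of the restriction of an operator to the coordinate subspace spanned by S:
  the quadratic form is real and nonnegative.\<close>
definition psd_on :: "'a set \<Rightarrow> 'a op \<Rightarrow> bool" where
  "psd_on S A \<longleftrightarrow> (\<forall>v :: 'a \<Rightarrow> complex.
      Im (\<Sum>i\<in>S. \<Sum>j\<in>S. cnj (v i) * A i j * v j) = 0 \<and>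
      Re (\<Sum>i\<in>S. \<Sum>j\<in>S. cnj (v i) * A i j * v j) \<ge> 0)"

definition psd :: "('a::finite) op \<Rightarrow> bool" where
  "psd A \<longleftrightarrow> psd_on UNIV A"

definition is_state :: "('a::finite) op \<Rightarrow> bool" where
  "is_state \<rho> \<longleftrightarrow> psd \<rho> \<and> mtrace \<rho> = 1"

definition is_linear_map :: "('a op \<Rightarrow> 'b op) \<Rightarrow> bool" where
  "is_linear_map \<Phi> \<longleftrightarrow>
     (\<forall>A B. \<Phi> (\<lambda>i j. A i j + B i j) = (\<lambda>i j. \<Phi> A i j + \<Phi> B i j)) \<and>
     (\<forall>c A. \<Phi> (\<lambda>i j. c * A i j) = (\<lambda>i j. c * \<Phi> A i j))"

text \<open>(id_n \<otimes> \<Phi>) acting on L(C^n \<otimes> C^'a); the ancilla C^n has basis indices {..<n}.\<close>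
definition ampl :: "('a op \<Rightarrow> 'b op) \<Rightarrow> (nat \<times> 'a) op \<Rightarrow> (nat \<times> 'b) op" where
  "ampl \<Phi> X = (\<lambda>(i, b) (j, b'). \<Phi> (\<lambda>a a'. X (i, a) (j, a')) b b')"

definition completely_positive :: "(('a::finite) op \<Rightarrow> ('b::finite) op) \<Rightarrow> bool" where
  "completely_positive \<Phi> \<longleftrightarrow>
     (\<forall>n::nat. \<forall>X. psd_on ({..<n} \<times> UNIV) X \<longrightarrow> psd_on ({..<n} \<times> UNIV) (ampl \<Phi> X))"

definition trace_nonincreasing :: "(('a::finite) op \<Rightarrow> ('b::finite) op) \<Rightarrow> bool" where
  "trace_nonincreasing \<Phi> \<longleftrightarrow> (\<forall>\<rho>. psd \<rho> \<longrightarrow> Re (mtrace (\<Phi> \<rho>)) \<le> Re (mtrace \<rho>))"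

text \<open>Instruments Ins(\<Omega>, C^'a, C^'b) with \<Omega> = UNIV :: 'x set.\<close>
definition instrument :: "(('x::finite) \<Rightarrow> ('a::finite) op \<Rightarrow> ('b::finite) op) \<Rightarrow> bool" where
  "instrument I \<longleftrightarrow>
     (\<forall>x. is_linear_map (I x) \<and> completely_positive (I x) \<and> trace_nonincreasing (I x)) \<and>
     (\<forall>\<rho>. mtrace (\<lambda>i j. \<Sum>x\<in>UNIV. I x \<rho> i j) = mtrace \<rho>)"

definition induced_povm :: "(('x::finite) \<Rightarrow> ('a::finite) op \<Rightarrow> ('b::finite) op) \<Rightarrow> 'x \<Rightarrow> 'a op" where
  "induced_povm I x = (THE A. \<forall>\<rho>. mtrace (mmult A \<rho>) = mtrace (I x \<rho>))"

definition msqrt :: "('a::finite) op \<Rightarrow> 'a op" where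
  "msqrt A = (THE S. psd S \<and> mmult S S = A)"

definition lueders :: "(('x::finite) \<Rightarrow> ('a::finite) op) \<Rightarrow> 'x \<Rightarrow> 'a op \<Rightarrow> 'a op" where
  "lueders A x \<rho> = mmult (mmult (msqrt (A x)) \<rho>) (msqrt (A x))"

definition ptrace1 :: "(('k::finite) \<times> 'v) op \<Rightarrow> 'v op" where
  "ptrace1 M = (\<lambda>v v'. \<Sum>k\<in>UNIV. M (k, v) (k, v'))"

definition ptrace2 :: "('k \<times> ('v::finite)) op \<Rightarrow> 'k op" where
  "ptrace2 M = (\<lambda>k k'. \<Sum>v\<in>UNIV. M (k, v) (k', v))"

definition compatible ::
  "(('x::finite) \<Rightarrow> ('a::finite) op \<Rightarrow> ('k::finite) op) \<Rightarrow>
   (('y::finite) \<Rightarrow> 'a op \<Rightarrow> ('v::finite) op) \<Rightarrow> bool" where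
  "compatible I J \<longleftrightarrow>
     (\<exists>G :: 'x \<times> 'y \<Rightarrow> 'a op \<Rightarrow> ('k \<times> 'v) op.
        instrument G \<and>
        (\<forall>\<rho>. is_state \<rho> \<longrightarrow>
           (\<forall>y. (\<lambda>i j. \<Sum>x\<in>UNIV. ptrace1 (G (x, y) \<rho>) i j) = J y \<rho>) \<and>
           (\<forall>x. (\<lambda>i j. \<Sum>y\<in>UNIV. ptrace2 (G (x, y) \<rho>) i j) = I x \<rho>)))"

end

theory Submission
  imports Defs "HOL-Analysis.Analysis"
begin

text \<open>
  Let \<open>G\<close> be a joint instrument for the Lueders instruments of \<open>A = A\<^sup>I\<close> and \<open>B = A\<^sup>J\<close>.
  Its marginal \<open>\<rho> \<mapsto> \<Sum>\<^sub>y tr\<^sub>V G\<^sub>x\<^sub>y(\<rho>) = \<surd>A\<^sub>x \<rho> \<surd>A\<^sub>x\<close> has a single Kraus operator, which forces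
  the Choi matrix of every \<open>G\<^sub>x\<^sub>y\<close> to be the product of the rank-one Choi matrix of \<open>\<surd>A\<^sub>x\<close>
  with a positive operator on \<open>V\<close>; symmetrically it is a product through \<open>\<surd>B\<^sub>y\<close>.
  Comparing the two product forms shows that every effect \<open>A\<^sub>x\<close>, and likewise every \<open>B\<^sub>y\<close>,
  has rank at most one. A completely positive map with a rank-one effect is measure-and-prepare,
  \<open>I\<^sub>x(\<rho>) = tr[I\<^sub>x(\<rho>)] \<sigma>\<^sub>x\<close>, and two such instruments are jointly realised by measuring
  the POVM \<open>\<rho> \<mapsto> tr[G\<^sub>x\<^sub>y(\<rho>)]\<close> and preparing \<open>\<sigma>\<^sub>x \<otimes> \<tau>\<^sub>y\<close>.
\<close>

section \<open>Vectors, quadratic forms and positivity\<close>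

definition cinner :: "('a::finite \<Rightarrow> complex) \<Rightarrow> ('a \<Rightarrow> complex) \<Rightarrow> complex" where
  "cinner u v = (\<Sum>i\<in>UNIV. cnj (u i) * v i)"

definition mvmult :: "('a::finite) op \<Rightarrow> ('a \<Rightarrow> complex) \<Rightarrow> 'a \<Rightarrow> complex" where
  "mvmult A v = (\<lambda>i. \<Sum>j\<in>UNIV. A i j * v j)"

definition qform :: "('a::finite) op \<Rightarrow> ('a \<Rightarrow> complex) \<Rightarrow> complex" where
  "qform A v = (\<Sum>i\<in>UNIV. \<Sum>j\<in>UNIV. cnj (v i) * A i j * v j)"

definition outer :: "('a \<Rightarrow> complex) \<Rightarrow> ('a \<Rightarrow> complex) \<Rightarrow> 'a op" where
  "outer u w = (\<lambda>i j. u i * cnj (w j))"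

definition hermitian :: "'a op \<Rightarrow> bool" where
  "hermitian A \<longleftrightarrow> (\<forall>i j. A j i = cnj (A i j))"

definition basis_vec :: "'a \<Rightarrow> 'a \<Rightarrow> complex" where
  "basis_vec i = (\<lambda>j. if j = i then 1 else 0)"

lemma sum_basis_vec_right [simp]: "(\<Sum>j\<in>UNIV. f j * basis_vec (i::'a::finite) j) = (f i :: complex)"
  by (simp add: basis_vec_def if_distrib[of "\<lambda>x. _ * x"] sum.delta cong: if_cong)

lemma sum_basis_vec_left [simp]: "(\<Sum>j\<in>UNIV. basis_vec (i::'a::finite) j * f j) = (f i :: complex)"
  by (simp add: basis_vec_def if_distrib[of "\<lambda>x. x * _"] sum.delta cong: if_cong)

lemma basis_vec_self [simp]: "basis_vec i i = 1"
  by (simp add: basis_vec_def)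

lemma cnj_basis_vec [simp]: "cnj (basis_vec i j) = basis_vec i j"
  by (simp add: basis_vec_def)

lemma qform_basis_vec [simp]: "qform A (basis_vec i) = A i i"
  by (simp add: qform_def)

lemma psd_iff_qform: "psd A \<longleftrightarrow> (\<forall>v. Im (qform A v) = 0 \<and> Re (qform A v) \<ge> 0)"
  by (simp add: psd_def psd_on_def qform_def)

lemma psd_diag: assumes "psd A" shows "Im (A i i) = 0" "Re (A i i) \<ge> 0"
  using assms qform_basis_vec unfolding psd_iff_qform by metis+

lemma qform_eq_cinner: "qform A v = cinner v (mvmult A v)"
  by (simp add: qform_def cinner_def mvmult_def sum_distrib_left mult.assoc)

lemma qform_add_scaled:
  "qform A (\<lambda>i. x i + c * y i)
     = qform A x + cnj c * cinner y (mvmult A x) + c * cinner x (mvmult A y) + cnj c * c * qform A y"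
  by (simp add: qform_def cinner_def mvmult_def algebra_simps sum.distrib sum_distrib_left)

lemma qform_scale: "qform A (\<lambda>i. c * v i) = cnj c * c * qform A v"
  by (simp add: qform_def sum_distrib_left mult_ac)

lemma cinner_add_scaled_right: "cinner u (\<lambda>i. a i + c * b i) = cinner u a + c * cinner u b"
  by (simp add: cinner_def algebra_simps sum.distrib sum_distrib_left)

lemma cinner_diff_left: "cinner (\<lambda>i. a i - b i) u = cinner a u - cinner b u"
  by (simp add: cinner_def algebra_simps sum_subtractf)

lemma cinner_diff_right: "cinner u (\<lambda>i. a i - b i) = cinner u a - cinner u b"
  by (simp add: cinner_def algebra_simps sum_subtractf)

lemma cinner_scale_left: "cinner (\<lambda>i. c * b i) u = cnj c * cinner b u"
  by (simp add: cinner_def algebra_simps sum_distrib_left)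

lemma cinner_scale_right: "cinner u (\<lambda>i. c * b i) = c * cinner u b"
  by (simp add: cinner_def algebra_simps sum_distrib_left)

lemma cinner_sum_left: "cinner (\<lambda>i. \<Sum>k\<in>F. c k * w k i) u = (\<Sum>k\<in>F. cnj (c k) * cinner (w k) u)"
  by (simp add: cinner_def sum_distrib_left sum_distrib_right mult_ac) (rule sum.swap)

lemma cinner_sum_right: "cinner u (\<lambda>i. \<Sum>k\<in>F. c k * w k i) = (\<Sum>k\<in>F. c k * cinner u (w k))"
  by (simp add: cinner_def sum_distrib_left sum_distrib_right mult_ac) (rule sum.swap)

lemma cnj_cinner: "cnj (cinner u w) = cinner w u"
  by (simp add: cinner_def mult.commute)

lemma cinner_basis_vec_right [simp]: "cinner u (basis_vec i) = cnj (u i)"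
  by (simp add: cinner_def)

lemma cinner_zero_right [simp]: "cinner u (\<lambda>i. 0) = 0"
  by (simp add: cinner_def)

lemma cinner_self: "cinner v v = of_real (\<Sum>i\<in>UNIV. (cmod (v i))\<^sup>2)"
  unfolding cinner_def of_real_sum by (rule sum.cong) (simp_all only: complex_norm_square mult.commute)

lemma cinner_self_eq_Re: "cinner v v = of_real (Re (cinner v v))"
  by (simp add: cinner_self)

lemma cinner_self_eq_1_iff: "cinner v v = 1 \<longleftrightarrow> Re (cinner v v) = 1"
  by (subst cinner_self_eq_Re) simp

lemma Re_cinner_self_nonneg: "Re (cinner v v) \<ge> 0"
  by (simp add: cinner_self sum_nonneg del: of_real_sum)

lemma cinner_self_eq_0_iff: "cinner (v::'a::finite \<Rightarrow> complex) v = 0 \<longleftrightarrow> v = (\<lambda>i. 0)"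
proof
  assume "cinner v v = 0"
  hence "(\<Sum>i\<in>UNIV. (cmod (v i))\<^sup>2) = 0"
    unfolding cinner_self of_real_eq_0_iff .
  hence "\<forall>i\<in>UNIV. (cmod (v i))\<^sup>2 = 0" by (subst (asm) sum_nonneg_eq_0_iff) auto
  thus "v = (\<lambda>i. 0)" by auto
qed simp

lemma Re_cinner_self_pos: "v \<noteq> (\<lambda>i. 0) \<Longrightarrow> Re (cinner v v) > 0"
  using Re_cinner_self_nonneg[of v] cinner_self_eq_0_iff[of v] cinner_self_eq_Re[of v]
  by (metis less_eq_real_def of_real_0)

lemma cinner_normalized:
  assumes "v \<noteq> (\<lambda>i. 0)"
  defines "c \<equiv> complex_of_real (1 / sqrt (Re (cinner v v)))"
  shows "cinner (\<lambda>i. c * v i) (\<lambda>i. c * v i) = 1"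
proof -
  have "cinner (\<lambda>i. c * v i) (\<lambda>i. c * v i) = cnj c * c * cinner v v"
    by (simp add: cinner_scale_left cinner_scale_right)
  also have "\<dots> = 1"
    using Re_cinner_self_pos[OF assms(1)] by (subst cinner_self_eq_Re) (simp add: c_def flip: of_real_mult)
  finally show ?thesis .
qed

lemma cinner_add_scaled:
  "cinner (\<lambda>i. x i + c * y i) (\<lambda>i. x i + c * y i)
     = cinner x x + cnj c * cinner y x + c * cinner x y + cnj c * c * cinner y y"
  by (simp add: cinner_def algebra_simps sum.distrib sum_distrib_left)

lemma hermitian_cnj: "hermitian A \<Longrightarrow> cnj (A i j) = A j i"
  unfolding hermitian_def by (metis complex_cnj_cnj)

lemma cinner_hermitian:
  assumes "hermitian A" shows "cinner (mvmult A u) w = cinner u (mvmult A w)"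
proof -
  have "cinner (mvmult A u) w = (\<Sum>i\<in>UNIV. \<Sum>j\<in>UNIV. cnj (A i j) * cnj (u j) * w i)"
    by (simp add: cinner_def mvmult_def sum_distrib_right)
  also have "\<dots> = (\<Sum>j\<in>UNIV. \<Sum>i\<in>UNIV. cnj (A i j) * cnj (u j) * w i)"
    by (rule sum.swap)
  also have "\<dots> = cinner u (mvmult A w)"
    by (simp add: cinner_def mvmult_def sum_distrib_left hermitian_cnj[OF assms] mult_ac)
  finally show ?thesis .
qed

lemma psd_hermitian:
  assumes "psd A" shows "hermitian A"
  unfolding hermitian_def
proof (intro allI)
  fix i j
  have real: "Im (qform A v) = 0" for v using assms by (simp add: psd_iff_qform)
  have expand: "qform A (\<lambda>k. basis_vec i k + c * basis_vec j k)
      = A i i + cnj c * A j i + c * A i j + cnj c * c * A j j" for c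
    by (subst qform_add_scaled) (simp add: qform_def cinner_def mvmult_def)
  have "Im (A i i) = 0" "Im (A j j) = 0" using real[of "basis_vec i"] real[of "basis_vec j"] by simp_all
  moreover have "Im (A j i + A i j) = 0" using real[of "\<lambda>k. basis_vec i k + 1 * basis_vec j k"] calculation
    unfolding expand by simp
  moreover have "Re (A i j - A j i) = 0" using real[of "\<lambda>k. basis_vec i k + \<i> * basis_vec j k"] calculation
    unfolding expand by simp
  ultimately show "A j i = cnj (A i j)" by (simp add: complex_eq_iff)
qed

lemma qform_outer: "qform (outer u u) v = of_real ((cmod (cinner u v))\<^sup>2)"
proof -
  have "qform (outer u u) v = cnj (cinner u v) * cinner u v"
    unfolding qform_def outer_def cinner_def cnj_sum sum_product by (simp add: mult_ac)
  thus ?thesis by (simp only: complex_norm_square mult.commute)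
qed

lemma psd_outer: "psd (outer u u)"
  unfolding psd_iff_qform qform_outer by simp

lemma qform_sum_op: "qform (\<lambda>i j. \<Sum>z\<in>F. M z i j) v = (\<Sum>z\<in>F. qform (M z) v)"
  unfolding qform_def by (simp add: sum_distrib_left sum_distrib_right sum.swap[of _ F] mult.assoc)

lemma psd_sum: "(\<And>z. z \<in> F \<Longrightarrow> psd (M z)) \<Longrightarrow> psd (\<lambda>i j. \<Sum>z\<in>F. M z i j)"
  unfolding psd_iff_qform qform_sum_op by (simp add: Im_sum Re_sum sum_nonneg)

lemma psd_scale:
  assumes "psd A" "c \<ge> 0" shows "psd (\<lambda>i j. of_real c * A i j)"
proof -
  have "qform (\<lambda>i j. of_real c * A i j) v = of_real c * qform A v" for v
    unfolding qform_def by (simp add: sum_distrib_left mult_ac)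
  thus ?thesis using assms by (simp add: psd_iff_qform)
qed

lemma quadratic_nonpos_imp_linear_coeff_zero:
  fixes N c :: real
  assumes "\<And>t. 2 * t * N + t\<^sup>2 * c \<le> 0" "N \<ge> 0" shows "N = 0"
proof (rule ccontr)
  assume "N \<noteq> 0" hence N: "N > 0" using assms by auto
  define t where "t = N / (\<bar>c\<bar> + 1)"
  have t: "t > 0" "t * \<bar>c\<bar> < N" using N by (simp_all add: t_def field_simps)
  moreover have "- (t * c) \<le> t * \<bar>c\<bar>" using t(1) by (simp add: abs_if)
  ultimately have "0 < t * (2 * N + t * c)" using N by (intro mult_pos_pos) linarith+
  thus False using assms(1)[of t] by (simp add: algebra_simps power2_eq_square)
qed

lemma psd_qform_zero_imp_kernel:
  assumes "psd Z" "qform Z x = 0" shows "mvmult Z x = (\<lambda>i. 0)"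
proof -
  define y where "y = mvmult Z x"
  have xy: "cinner x (mvmult Z y) = cinner y y"
    unfolding y_def cinner_hermitian[OF psd_hermitian[OF assms(1)], symmetric] ..
  have "Re (cinner y y) = 0"
  proof (rule quadratic_nonpos_imp_linear_coeff_zero)
    fix t :: real
    have "Re (qform Z (\<lambda>i. x i + of_real (- t) * y i)) = - 2 * t * Re (cinner y y) + t\<^sup>2 * Re (qform Z y)"
      unfolding qform_add_scaled assms(2) xy y_def[symmetric]
      by (subst cinner_self_eq_Re) (simp add: power2_eq_square)
    moreover have "Re (qform Z (\<lambda>i. x i + of_real (- t) * y i)) \<ge> 0"
      using assms(1) by (simp add: psd_iff_qform)
    ultimately show "2 * t * Re (cinner y y) + t\<^sup>2 * (- Re (qform Z y)) \<le> 0" by simp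
  qed (rule Re_cinner_self_nonneg)
  thus ?thesis using cinner_self_eq_Re[of y] cinner_self_eq_0_iff[of y] by (simp add: y_def)
qed

section \<open>Spectral theorem and positive square roots\<close>

definition orthonormal :: "('a::finite \<Rightarrow> complex) set \<Rightarrow> bool" where
  "orthonormal B \<longleftrightarrow> finite B \<and> (\<forall>u\<in>B. cinner u u = 1) \<and> (\<forall>u\<in>B. \<forall>w\<in>B. u \<noteq> w \<longrightarrow> cinner u w = 0)"

definition orth_proj :: "('a::finite \<Rightarrow> complex) set \<Rightarrow> ('a \<Rightarrow> complex) \<Rightarrow> 'a \<Rightarrow> complex" where
  "orth_proj B v = (\<lambda>i. \<Sum>u\<in>B. cinner u v * u i)"

lemma orthonormal_sum_cinner:
  assumes "orthonormal B" "w \<in> B"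
  shows "(\<Sum>u\<in>B. c u * cinner w u) = c w"
proof -
  have "(\<Sum>u\<in>B. c u * cinner w u) = (\<Sum>u\<in>B. if u = w then c u else 0)"
    using assms unfolding orthonormal_def by (intro sum.cong) auto
  also have "\<dots> = c w" using assms unfolding orthonormal_def by (simp add: sum.delta)
  finally show ?thesis .
qed

lemma cinner_orth_proj:
  assumes "orthonormal B" "w \<in> B" shows "cinner w (orth_proj B v) = cinner w v"
  unfolding orth_proj_def cinner_sum_right using orthonormal_sum_cinner[OF assms] by simp

lemma orthonormal_insert:
  assumes "orthonormal B" "cinner u u = 1" "\<forall>b\<in>B. cinner b u = 0"
  shows "orthonormal (insert u B)"
proof -
  have "cinner u b = 0" if "b \<in> B" for b
    using assms(3) that cnj_cinner[of b u] by simp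
  thus ?thesis using assms unfolding orthonormal_def by auto
qed

lemma bessel_inequality:
  assumes "orthonormal B"
  shows "(\<Sum>u\<in>B. (cmod (cinner u v))\<^sup>2) \<le> Re (cinner v v)"
proof -
  define s where "s = (\<Sum>u\<in>B. cnj (cinner u v) * cinner u v)"
  have s: "s = of_real (\<Sum>u\<in>B. (cmod (cinner u v))\<^sup>2)"
    unfolding s_def of_real_sum by (rule sum.cong) (simp_all only: complex_norm_square mult.commute)
  have Pv_v: "cinner (orth_proj B v) v = s"
    unfolding orth_proj_def cinner_sum_left s_def ..
  have "cinner (orth_proj B v) (orth_proj B v) = s"
    unfolding orth_proj_def[of B v] cinner_sum_left s_def
    using cinner_orth_proj[OF assms] by (intro sum.cong) (simp_all add: orth_proj_def)
  moreover have "cinner v (orth_proj B v) = s"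
    using Pv_v s cnj_cinner by (metis complex_cnj_complex_of_real)
  ultimately have "cinner (\<lambda>i. v i - orth_proj B v i) (\<lambda>i. v i - orth_proj B v i) = cinner v v - s"
    unfolding cinner_diff_left cinner_diff_right Pv_v by simp
  thus ?thesis using Re_cinner_self_nonneg[of "\<lambda>i. v i - orth_proj B v i"] unfolding s by simp
qed

lemma orthonormal_card_le:
  assumes "orthonormal (B :: ('a::finite \<Rightarrow> complex) set)"
  shows "card B \<le> CARD('a)"
proof -
  have "real (card B) = (\<Sum>u\<in>B. Re (cinner u u))" using assms unfolding orthonormal_def by simp
  also have "\<dots> = (\<Sum>u\<in>B. \<Sum>i\<in>UNIV. (cmod (cinner u (basis_vec i)))\<^sup>2)"
    by (simp add: cinner_self Re_sum del: of_real_sum)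
  also have "\<dots> = (\<Sum>i\<in>UNIV. \<Sum>u\<in>B. (cmod (cinner u (basis_vec i)))\<^sup>2)" by (rule sum.swap)
  also have "\<dots> \<le> (\<Sum>i\<in>(UNIV::'a set). Re (cinner (basis_vec i) (basis_vec i)))"
    by (rule sum_mono) (rule bessel_inequality[OF assms])
  also have "\<dots> = real CARD('a)" by simp
  finally show ?thesis by simp
qed

definition orthonormal_eigenvectors ::
  "('a::finite) op \<Rightarrow> ('a \<Rightarrow> complex) set \<Rightarrow> (('a \<Rightarrow> complex) \<Rightarrow> real) \<Rightarrow> bool" where
  "orthonormal_eigenvectors A B lam \<longleftrightarrow>
     orthonormal B \<and> (\<forall>u\<in>B. mvmult A u = (\<lambda>i. of_real (lam u) * u i))"

lemma hermitian_preserves_orth_complement: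
  assumes "hermitian A" "orthonormal_eigenvectors A B lam" "\<forall>u\<in>B. cinner u v = 0"
  shows "\<forall>u\<in>B. cinner u (mvmult A v) = 0"
proof
  fix u assume "u \<in> B"
  hence "cinner u (mvmult A v) = of_real (lam u) * cinner u v"
    using assms(2) unfolding cinner_hermitian[OF assms(1), symmetric] orthonormal_eigenvectors_def
    by (simp add: cinner_scale_left)
  thus "cinner u (mvmult A v) = 0" using assms(3) \<open>u \<in> B\<close> by simp
qed

lemma norm_vec_nth_eq_cinner: "norm (x::complex^'a::finite) = sqrt (Re (cinner (vec_nth x) (vec_nth x)))"
  by (simp add: norm_vec_def L2_set_def cinner_self del: of_real_sum)

text \<open>Eigenvectors are found as maximisers of the Rayleigh quotient on the orthogonal
  complement of those already found.\<close>

lemma exists_qform_max_on_unit_orth: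
  fixes A :: "('a::finite) op"
  assumes "(\<forall>b\<in>B. cinner b w = 0) \<and> cinner w w = 1"
  shows "\<exists>u. (\<forall>b\<in>B. cinner b u = 0) \<and> cinner u u = 1 \<and>
    (\<forall>v. (\<forall>b\<in>B. cinner b v = 0) \<and> cinner v v = 1 \<longrightarrow> Re (qform A v) \<le> Re (qform A u))"
proof -
  define K where "K = sphere (0::complex^'a) 1 \<inter> (\<Inter>b\<in>B. {x. cinner b (vec_nth x) = 0})"
  define f where "f x = Re (qform A (vec_nth x))" for x :: "complex^'a"
  have K: "x \<in> K \<longleftrightarrow> (\<forall>b\<in>B. cinner b (vec_nth x) = 0) \<and> cinner (vec_nth x) (vec_nth x) = 1" for x
    unfolding K_def by (auto simp: norm_vec_nth_eq_cinner cinner_self_eq_1_iff)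
  have "compact K"
    unfolding K_def
    by (intro compact_Int_closed compact_sphere closed_INT ballI closed_Collect_eq)
      (simp_all add: cinner_def continuous_on_sum continuous_on_mult continuous_on_component)
  moreover have "K \<noteq> {}" using K[of "vec_lambda w"] assms by (auto simp: vec_lambda_inverse)
  moreover have "continuous_on K f"
    unfolding f_def qform_def by (intro continuous_intros)
  ultimately obtain x where x: "x \<in> K" "\<forall>y\<in>K. f y \<le> f x"
    using continuous_attains_sup by blast
  show ?thesis
  proof (intro exI conjI allI impI)
    show "\<forall>b\<in>B. cinner b (vec_nth x) = 0" "cinner (vec_nth x) (vec_nth x) = 1" using x(1) K by blast+
    fix v assume "(\<forall>b\<in>B. cinner b v = 0) \<and> cinner v v = 1"
    hence "vec_lambda v \<in> K" using K[of "vec_lambda v"] by (simp add: vec_lambda_inverse)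
    thus "Re (qform A v) \<le> Re (qform A (vec_nth x))" using x(2) by (force simp: f_def vec_lambda_inverse)
  qed
qed

lemma exists_qform_maximizer:
  fixes A :: "('a::finite) op"
  assumes "\<forall>b\<in>B. cinner b w = 0" "w \<noteq> (\<lambda>i. 0)"
  shows "\<exists>u. (\<forall>b\<in>B. cinner b u = 0) \<and> cinner u u = 1 \<and>
    (\<forall>v. (\<forall>b\<in>B. cinner b v = 0) \<longrightarrow> Re (qform A v) \<le> Re (qform A u) * Re (cinner v v))"
proof -
  define normalize where "normalize v = (\<lambda>i. of_real (1 / sqrt (Re (cinner v v))) * v i)" for v :: "'a \<Rightarrow> complex"
  have normalize: "(\<forall>b\<in>B. cinner b (normalize v) = 0) \<and> cinner (normalize v) (normalize v) = 1"
    "Re (qform A (normalize v)) = Re (qform A v) / Re (cinner v v)"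
    if "\<forall>b\<in>B. cinner b v = 0" "v \<noteq> (\<lambda>i. 0)" for v
  proof -
    show "(\<forall>b\<in>B. cinner b (normalize v) = 0) \<and> cinner (normalize v) (normalize v) = 1"
      using that(1) cinner_normalized[OF that(2)] unfolding normalize_def cinner_scale_right by simp
    show "Re (qform A (normalize v)) = Re (qform A v) / Re (cinner v v)"
      using Re_cinner_self_pos[OF that(2)] unfolding normalize_def qform_scale by (simp flip: of_real_mult)
  qed
  obtain u where u: "\<forall>b\<in>B. cinner b u = 0" "cinner u u = 1"
    and max: "\<And>v. (\<forall>b\<in>B. cinner b v = 0) \<and> cinner v v = 1 \<Longrightarrow> Re (qform A v) \<le> Re (qform A u)"
    using exists_qform_max_on_unit_orth[OF normalize(1)[OF assms]] by blast
  have "Re (qform A v) \<le> Re (qform A u) * Re (cinner v v)" if "\<forall>b\<in>B. cinner b v = 0" for v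
  proof (cases "v = (\<lambda>i. 0)")
    case False
    thus ?thesis using max[OF normalize(1)[OF that False]] normalize(2)[OF that False]
      Re_cinner_self_pos[OF False] by (simp add: field_simps)
  qed (simp add: qform_def)
  thus ?thesis using u by blast
qed

lemma qform_maximizer_is_eigenvector:
  assumes "hermitian A" "cinner u u = 1"
    and r: "r = (\<lambda>i. mvmult A u i - of_real (Re (qform A u)) * u i)"
    and max: "\<And>t::real. Re (qform A (\<lambda>i. u i + of_real t * r i))
      \<le> Re (qform A u) * Re (cinner (\<lambda>i. u i + of_real t * r i) (\<lambda>i. u i + of_real t * r i))"
  shows "mvmult A u = (\<lambda>i. of_real (Re (qform A u)) * u i)"
proof -
  define M where "M = Re (qform A u)"
  have e1: "cinner r (mvmult A u) - M * cinner r u = cinner r r"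
    by (simp add: r M_def cinner_diff_right cinner_scale_right)
  have "cinner u (mvmult A r) - M * cinner u r = cnj (cinner r (mvmult A u) - M * cinner r u)"
    by (simp add: cinner_hermitian[OF assms(1), symmetric] cnj_cinner)
  hence e2: "Re (cinner u (mvmult A r) - M * cinner u r) = Re (cinner r r)"
    unfolding e1 by simp
  have "Re (cinner r r) = 0"
  proof (rule quadratic_nonpos_imp_linear_coeff_zero)
    fix t :: real
    have "Re (qform A (\<lambda>i. u i + of_real t * r i))
        - M * Re (cinner (\<lambda>i. u i + of_real t * r i) (\<lambda>i. u i + of_real t * r i))
        = 2 * t * Re (cinner r r) + t\<^sup>2 * (Re (qform A r) - M * Re (cinner r r))"
      using e1 e2 assms(2) unfolding qform_add_scaled cinner_add_scaled
      by (simp add: M_def algebra_simps power2_eq_square)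
    thus "2 * t * Re (cinner r r) + t\<^sup>2 * (Re (qform A r) - M * Re (cinner r r)) \<le> 0"
      using max[of t] unfolding M_def by linarith
  qed (rule Re_cinner_self_nonneg)
  hence "r = (\<lambda>i. 0)" using cinner_self_eq_Re[of r] cinner_self_eq_0_iff[of r] by simp
  thus ?thesis unfolding r by (metis eq_iff_diff_eq_0)
qed

lemma orthonormal_eigenvectors_extend:
  assumes "hermitian A" "orthonormal_eigenvectors A B lam" "orth_proj B v \<noteq> v"
  shows "\<exists>u M. u \<notin> B \<and> orthonormal_eigenvectors A (insert u B) (lam(u := M))"
proof -
  have B: "orthonormal B" using assms(2) by (simp add: orthonormal_eigenvectors_def)
  define w where "w = (\<lambda>i. v i - orth_proj B v i)"
  have "\<forall>b\<in>B. cinner b w = 0" by (simp add: w_def cinner_diff_right cinner_orth_proj[OF B])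
  moreover have "w \<noteq> (\<lambda>i. 0)" using assms(3) by (auto simp: w_def fun_eq_iff) metis
  ultimately obtain u where u: "\<forall>b\<in>B. cinner b u = 0" "cinner u u = 1"
    and max: "\<And>v. \<forall>b\<in>B. cinner b v = 0 \<Longrightarrow> Re (qform A v) \<le> Re (qform A u) * Re (cinner v v)"
    using exists_qform_maximizer by blast
  define r where "r = (\<lambda>i. mvmult A u i - of_real (Re (qform A u)) * u i)"
  have "\<forall>b\<in>B. cinner b r = 0"
    using hermitian_preserves_orth_complement[OF assms(1,2) u(1)] u(1)
    by (simp add: r_def cinner_diff_right cinner_scale_right)
  hence "\<forall>b\<in>B. cinner b (\<lambda>i. u i + of_real t * r i) = 0" for t
    using u(1) by (simp add: cinner_add_scaled_right)
  hence eigen: "mvmult A u = (\<lambda>i. of_real (Re (qform A u)) * u i)"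
    using qform_maximizer_is_eigenvector[OF assms(1) u(2) r_def] max by blast
  have "u \<notin> B" using u by force
  moreover have "orthonormal_eigenvectors A (insert u B) (lam(u := Re (qform A u)))"
    using assms(2) orthonormal_insert[OF B u(2,1)] eigen \<open>u \<notin> B\<close>
    by (auto simp: orthonormal_eigenvectors_def)
  ultimately show ?thesis by blast
qed

theorem hermitian_spectral_decomposition:
  fixes A :: "('a::finite) op"
  assumes "hermitian A"
  shows "\<exists>B lam. orthonormal_eigenvectors A B lam \<and> (\<forall>v. orth_proj B v = v)"
proof -
  let ?P = "\<lambda>B. \<exists>lam. orthonormal_eigenvectors A B lam"
  have "?P {}" by (auto simp: orthonormal_eigenvectors_def orthonormal_def)
  moreover have "\<forall>B. ?P B \<longrightarrow> card B < CARD('a) + 1"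
    using orthonormal_card_le by (auto simp: orthonormal_eigenvectors_def less_Suc_eq_le)
  ultimately obtain B lam where B: "orthonormal_eigenvectors A B lam"
    and maximal: "\<And>B'. ?P B' \<Longrightarrow> card B' \<le> card B"
    using ex_has_greatest_nat[of ?P "{}" card "CARD('a) + 1"] by blast
  have "orth_proj B v = v" for v
  proof (rule ccontr)
    assume "orth_proj B v \<noteq> v"
    then obtain u M where "u \<notin> B" "orthonormal_eigenvectors A (insert u B) (lam(u := M))"
      using orthonormal_eigenvectors_extend[OF assms B] by blast
    moreover have "finite B" using B by (simp add: orthonormal_eigenvectors_def orthonormal_def)
    ultimately show False using maximal[of "insert u B"] by auto
  qed
  thus ?thesis using B by blast
qed

lemma mvmult_sum: "mvmult A (\<lambda>i. \<Sum>k\<in>F. c k * w k i) = (\<lambda>i. \<Sum>k\<in>F. c k * mvmult A (w k) i)"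
  by (rule ext) (simp add: mvmult_def sum_distrib_left mult_ac, rule sum.swap)

lemma mvmult_scale: "mvmult A (\<lambda>i. c * w i) = (\<lambda>i. c * mvmult A w i)"
  by (rule ext) (simp add: mvmult_def sum_distrib_left mult.left_commute)

lemma mvmult_diff: "mvmult A (\<lambda>i. a i - b i) = (\<lambda>i. mvmult A a i - mvmult A b i)"
  by (rule ext) (simp add: mvmult_def right_diff_distrib sum_subtractf)

lemma mvmult_mmult: "mvmult (mmult X Y) v = mvmult X (mvmult Y v)"
  by (rule ext) (simp add: mvmult_def mmult_def sum_distrib_left sum_distrib_right mult.assoc, rule sum.swap)

lemma op_eqI_mvmult: "(\<And>v. mvmult X v = mvmult Y v) \<Longrightarrow> X = Y"
  by (metis ext mvmult_def sum_basis_vec_right)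

lemma mvmult_orth_proj:
  assumes "orth_proj B v = v" shows "mvmult R v = (\<lambda>i. \<Sum>u\<in>B. cinner u v * mvmult R u i)"
  using mvmult_sum[of R "\<lambda>u. cinner u v" "\<lambda>u. u" B] assms unfolding orth_proj_def by simp

lemma psd_eigenvalue_nonneg:
  assumes "psd A" "orthonormal_eigenvectors A B lam" "u \<in> B"
  shows "lam u \<ge> 0"
proof -
  have "qform A u = of_real (lam u)"
    using assms(2,3) by (simp add: orthonormal_eigenvectors_def orthonormal_def qform_eq_cinner cinner_scale_right)
  thus ?thesis using assms(1) by (metis psd_iff_qform Re_complex_of_real)
qed

lemma psd_sqrt_exists:
  assumes "psd A" shows "\<exists>S. psd S \<and> mmult S S = A"
proof -
  obtain B lam where eig: "orthonormal_eigenvectors A B lam" and span: "\<forall>v. orth_proj B v = v"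
    using hermitian_spectral_decomposition[OF psd_hermitian[OF assms]] by blast
  have B: "orthonormal B" and Au: "\<And>u. u \<in> B \<Longrightarrow> mvmult A u = (\<lambda>i. of_real (lam u) * u i)"
    using eig by (auto simp: orthonormal_eigenvectors_def)
  have lam: "lam u \<ge> 0" if "u \<in> B" for u using psd_eigenvalue_nonneg[OF assms eig that] .
  define S where "S = (\<lambda>i j. \<Sum>u\<in>B. of_real (sqrt (lam u)) * outer u u i j)"
  have "psd S" unfolding S_def using lam by (intro psd_sum psd_scale psd_outer) auto
  moreover have "mmult S S = A"
  proof (rule op_eqI_mvmult)
    fix v
    have Sv: "mvmult S w = (\<lambda>i. \<Sum>u\<in>B. of_real (sqrt (lam u)) * cinner u w * u i)" for w
      by (rule ext) (simp add: S_def outer_def mvmult_def cinner_def sum_distrib_left sum_distrib_right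
          mult_ac, rule sum.swap)
    have "cinner u (mvmult S v) = of_real (sqrt (lam u)) * cinner u v" if "u \<in> B" for u
      unfolding Sv cinner_sum_right using orthonormal_sum_cinner[OF B that] by simp
    hence "mvmult (mmult S S) v = (\<lambda>i. \<Sum>u\<in>B. cinner u v * (of_real (lam u) * u i))"
      using lam by (auto simp: mvmult_mmult Sv mult_ac intro!: ext sum.cong simp flip: of_real_mult)
    also have "\<dots> = mvmult A v" using mvmult_orth_proj[OF span[rule_format], of A] Au by simp
    finally show "mvmult (mmult S S) v = mvmult A v" .
  qed
  ultimately show ?thesis by blast
qed

lemma psd_sqrt_on_eigenvector:
  assumes R: "psd R" "mmult R R = A" and u: "mvmult A u = (\<lambda>i. of_real l * u i)" and "l \<ge> 0"
  shows "mvmult R u = (\<lambda>i. of_real (sqrt l) * u i)"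
proof -
  define c where "c = sqrt l"
  define z where "z = (\<lambda>i. mvmult R u i - of_real c * u i)"
  have "of_real (c * c) = (of_real l :: complex)" using \<open>l \<ge> 0\<close> by (simp add: c_def)
  hence RRu: "mvmult R (mvmult R u) = (\<lambda>i. of_real (c * c) * u i)"
    using u R(2) by (simp flip: mvmult_mmult)
  have "mvmult R z = (\<lambda>i. of_real (- c) * z i)"
    unfolding z_def mvmult_diff mvmult_scale RRu by (auto simp: algebra_simps)
  hence "Re (qform R z) = - c * Re (cinner z z)"
    unfolding qform_eq_cinner by (simp only: cinner_scale_right) simp
  moreover have "Re (qform R z) \<ge> 0" using R(1) by (simp add: psd_iff_qform)
  moreover have "c \<ge> 0" using \<open>l \<ge> 0\<close> by (simp add: c_def)
  moreover have "c * Re (cinner z z) \<ge> 0" using \<open>c \<ge> 0\<close> Re_cinner_self_nonneg[of z] by simp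
  ultimately have "c * Re (cinner z z) = 0" by linarith
  then consider "c = 0" | "Re (cinner z z) = 0" by auto
  thus ?thesis
  proof cases
    case 1
    have "cinner (mvmult R u) (mvmult R u) = 0"
      unfolding cinner_hermitian[OF psd_hermitian[OF R(1)]] RRu 1 by simp
    thus ?thesis using 1 by (simp add: cinner_self_eq_0_iff c_def)
  next
    case 2
    hence "z = (\<lambda>i. 0)" using cinner_self_eq_Re[of z] cinner_self_eq_0_iff[of z] by simp
    thus ?thesis unfolding z_def c_def by (simp add: fun_eq_iff)
  qed
qed

lemma psd_sqrt_unique:
  assumes "psd A" shows "\<exists>!S. psd S \<and> mmult S S = A"
proof (rule ex_ex1I)
  show "\<exists>S. psd S \<and> mmult S S = A" by (rule psd_sqrt_exists[OF assms])
next
  fix R S assume R: "psd R \<and> mmult R R = A" and S: "psd S \<and> mmult S S = A"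
  obtain B lam where eig: "orthonormal_eigenvectors A B lam" and span: "\<forall>v. orth_proj B v = v"
    using hermitian_spectral_decomposition[OF psd_hermitian[OF assms]] by blast
  have RS: "mvmult R u = mvmult S u" if "u \<in> B" for u
  proof -
    have Au: "mvmult A u = (\<lambda>i. of_real (lam u) * u i)"
      using that eig by (simp add: orthonormal_eigenvectors_def)
    note sqrt_on_u = psd_sqrt_on_eigenvector[OF _ _ Au psd_eigenvalue_nonneg[OF assms eig that]]
    show ?thesis using sqrt_on_u[of R] sqrt_on_u[of S] R S by simp
  qed
  show "R = S"
  proof (rule op_eqI_mvmult)
    fix v
    show "mvmult R v = mvmult S v"
      unfolding mvmult_orth_proj[OF span[rule_format], of _ v] using RS by (intro ext sum.cong) simp_all
  qed
qed

lemma psd_msqrt: "psd A \<Longrightarrow> psd (msqrt A)"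
  and mmult_msqrt_msqrt: "psd A \<Longrightarrow> mmult (msqrt A) (msqrt A) = A"
  using theI'[OF psd_sqrt_unique] unfolding msqrt_def by blast+

section \<open>Linear maps, Choi matrices and induced POVMs\<close>

definition munit :: "'a \<Rightarrow> 'a \<Rightarrow> 'a op" where
  "munit i j = (\<lambda>k l. if k = i \<and> l = j then 1 else 0)"

lemma munit_eq_outer: "munit i j = outer (basis_vec i) (basis_vec j)"
  by (intro ext) (simp add: munit_def outer_def basis_vec_def)

lemma linear_map_add: "is_linear_map \<Phi> \<Longrightarrow> \<Phi> (\<lambda>i j. A i j + B i j) = (\<lambda>i j. \<Phi> A i j + \<Phi> B i j)"
  and linear_map_scale: "is_linear_map \<Phi> \<Longrightarrow> \<Phi> (\<lambda>i j. c * A i j) = (\<lambda>i j. c * \<Phi> A i j)"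
  by (simp_all add: is_linear_map_def)

lemma linear_map_zero: "is_linear_map \<Phi> \<Longrightarrow> \<Phi> (\<lambda>i j. 0) = (\<lambda>i j. 0)"
  using linear_map_scale[of \<Phi> 0 "\<lambda>i j. 0"] by simp

lemma linear_map_sum:
  assumes "is_linear_map \<Phi>" "finite F"
  shows "\<Phi> (\<lambda>i j. \<Sum>k\<in>F. c k * M k i j) = (\<lambda>i j. \<Sum>k\<in>F. c k * \<Phi> (M k) i j)"
  using assms(2)
proof (induction F rule: finite_induct)
  case empty thus ?case using linear_map_zero[OF assms(1)] by simp
next
  case (insert x F)
  thus ?case using linear_map_add[OF assms(1), of "\<lambda>i j. c x * M x i j"] linear_map_scale[OF assms(1)]
    by simp
qed

lemma sum_UNIV_prod: "(\<Sum>p\<in>(UNIV::('a::finite \<times> 'b::finite) set). f p) = (\<Sum>a\<in>UNIV. \<Sum>b\<in>UNIV. f (a, b))"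
  by (simp add: sum.cartesian_product' flip: UNIV_Times_UNIV)

lemma linear_map_expand:
  fixes \<Phi> :: "('a::finite) op \<Rightarrow> ('b::finite) op"
  assumes "is_linear_map \<Phi>"
  shows "\<Phi> \<rho> = (\<lambda>a b. \<Sum>i\<in>UNIV. \<Sum>j\<in>UNIV. \<rho> i j * \<Phi> (munit i j) a b)"
proof -
  have "\<rho> = (\<lambda>k l. \<Sum>p\<in>UNIV. \<rho> (fst p) (snd p) * munit (fst p) (snd p) k l)"
  proof (intro ext)
    fix k l
    have "(\<Sum>p\<in>UNIV. \<rho> (fst p) (snd p) * munit (fst p) (snd p) k l) = (\<Sum>p\<in>UNIV. if p = (k, l) then \<rho> k l else 0)"
      by (rule sum.cong) (auto simp: munit_def)
    thus "\<rho> k l = (\<Sum>p\<in>UNIV. \<rho> (fst p) (snd p) * munit (fst p) (snd p) k l)" by simp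
  qed
  hence "\<Phi> \<rho> = \<Phi> (\<lambda>k l. \<Sum>p\<in>UNIV. \<rho> (fst p) (snd p) * munit (fst p) (snd p) k l)" by simp
  also have "\<dots> = (\<lambda>a b. \<Sum>p\<in>UNIV. \<rho> (fst p) (snd p) * \<Phi> (munit (fst p) (snd p)) a b)"
    by (rule linear_map_sum[OF assms finite])
  finally show ?thesis unfolding sum_UNIV_prod by simp
qed

lemma linear_map_eqI:
  fixes \<Phi> \<Psi> :: "('a::finite) op \<Rightarrow> ('b::finite) op"
  assumes "is_linear_map \<Phi>" "is_linear_map \<Psi>" "\<And>i j. \<Phi> (munit i j) = \<Psi> (munit i j)"
  shows "\<Phi> = \<Psi>"
proof
  fix \<rho>
  have "\<Phi> \<rho> = (\<lambda>a b. \<Sum>i\<in>UNIV. \<Sum>j\<in>UNIV. \<rho> i j * \<Phi> (munit i j) a b)"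
    by (rule linear_map_expand[OF assms(1)])
  also have "\<dots> = \<Psi> \<rho>"
    unfolding assms(3) by (rule linear_map_expand[OF assms(2), symmetric])
  finally show "\<Phi> \<rho> = \<Psi> \<rho>" .
qed

lemma mtrace_outer: "mtrace (outer u u) = cinner u u"
  by (simp add: mtrace_def outer_def cinner_def mult.commute)

lemma is_state_munit: "is_state (munit i i)"
  by (simp add: is_state_def munit_eq_outer psd_outer mtrace_outer)

lemma linear_map_eq_on_outer:
  fixes \<Phi> \<Psi> :: "('a::finite) op \<Rightarrow> ('b::finite) op"
  assumes "is_linear_map \<Phi>" "is_linear_map \<Psi>" "\<And>\<rho>. is_state \<rho> \<Longrightarrow> \<Phi> \<rho> = \<Psi> \<rho>"
  shows "\<Phi> (outer u u) = \<Psi> (outer u u)"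
proof (cases "u = (\<lambda>i. 0)")
  case True
  hence "outer u u = (\<lambda>i j. 0)" by (simp add: outer_def)
  thus ?thesis using linear_map_zero[OF assms(1)] linear_map_zero[OF assms(2)] by simp
next
  case False
  define n where "n = Re (cinner u u)"
  have n: "n > 0" "cinner u u = of_real n"
    using Re_cinner_self_pos[OF False] cinner_self_eq_Re[of u] by (simp_all add: n_def)
  define w where "w = (\<lambda>i. of_real (1 / sqrt n) * u i)"
  have "mtrace (outer w w) = 1"
    unfolding mtrace_outer w_def n_def by (rule cinner_normalized[OF False])
  hence "is_state (outer w w)" by (simp add: is_state_def psd_outer)
  moreover have "outer u u = (\<lambda>i j. of_real n * outer w w i j)"
    using n by (auto simp: outer_def w_def field_simps simp flip: of_real_mult intro!: ext)
  ultimately show ?thesis using linear_map_scale[OF assms(1)] linear_map_scale[OF assms(2)] assms(3) by simp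
qed

text \<open>By polarisation, every matrix unit is a combination of four rank-one projections.\<close>

lemma linear_map_eq_on_states:
  fixes \<Phi> \<Psi> :: "('a::finite) op \<Rightarrow> ('b::finite) op"
  assumes "is_linear_map \<Phi>" "is_linear_map \<Psi>" "\<And>\<rho>. is_state \<rho> \<Longrightarrow> \<Phi> \<rho> = \<Psi> \<rho>"
  shows "\<Phi> = \<Psi>"
proof (rule linear_map_eqI[OF assms(1,2)])
  fix i j :: 'a
  define v where "v k = (\<lambda>t. basis_vec i t + \<i> ^ k * basis_vec j t)" for k :: nat
  have "munit i j = (\<lambda>a b. \<Sum>k\<in>{0..<4}. (\<i> ^ k / 4) * outer (v k) (v k) a b)"
    by (intro ext) (simp add: munit_eq_outer outer_def v_def eval_nat_numeral algebra_simps)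
  thus "\<Phi> (munit i j) = \<Psi> (munit i j)"
    by (simp only: linear_map_sum[OF assms(1) finite_atLeastLessThan]
        linear_map_sum[OF assms(2) finite_atLeastLessThan] linear_map_eq_on_outer[OF assms])
qed

lemma mtrace_mmult_munit: "mtrace (mmult (A::('a::finite) op) (munit j i)) = A i j"
proof -
  have "(\<Sum>k\<in>UNIV. A a k * munit j i k a) = (if a = i then A a j else 0)" for a
    by (cases "a = i") (simp_all add: munit_def if_distrib[of "\<lambda>x. _ * x"] sum.delta cong: if_cong)
  thus ?thesis unfolding mtrace_def mmult_def by simp
qed

lemma op_eqI_mtrace: "(\<And>\<rho>. mtrace (mmult A \<rho>) = mtrace (mmult B \<rho>)) \<Longrightarrow> A = B"
  by (metis ext mtrace_mmult_munit)

lemma mtrace_mmult_outer: "mtrace (mmult A (outer u u)) = qform A u"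
  unfolding mtrace_def mmult_def qform_def outer_def by (simp add: mult_ac)

lemma psd_mtrace: assumes "psd Z" shows "Im (mtrace Z) = 0" "Re (mtrace Z) \<ge> 0"
  using psd_diag[OF assms] by (auto simp: mtrace_def Re_sum Im_sum intro: sum_nonneg)

lemma ex1_induced_povm:
  fixes \<Phi> :: "('a::finite) op \<Rightarrow> ('b::finite) op"
  assumes "is_linear_map \<Phi>"
  shows "\<exists>!A. \<forall>\<rho>. mtrace (mmult A \<rho>) = mtrace (\<Phi> \<rho>)"
proof (rule ex_ex1I)
  define A where "A = (\<lambda>i j. mtrace (\<Phi> (munit j i)))"
  have "mtrace (\<Phi> \<rho>) = (\<Sum>a\<in>UNIV. \<Sum>i\<in>UNIV. \<Sum>j\<in>UNIV. \<rho> i j * \<Phi> (munit i j) a a)" for \<rho>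
    unfolding mtrace_def by (subst linear_map_expand[OF assms]) simp
  also have "\<dots> \<rho> = (\<Sum>i\<in>UNIV. \<Sum>j\<in>UNIV. \<Sum>a\<in>UNIV. \<rho> i j * \<Phi> (munit i j) a a)" for \<rho>
    by (subst sum.swap) (subst sum.swap, rule refl)
  also have "\<dots> \<rho> = mtrace (mmult A \<rho>)" for \<rho>
    unfolding mtrace_def mmult_def A_def by (subst sum.swap) (simp add: sum_distrib_left mult_ac)
  finally show "\<exists>A. \<forall>\<rho>. mtrace (mmult A \<rho>) = mtrace (\<Phi> \<rho>)" by metis
qed (simp add: op_eqI_mtrace)

lemma mtrace_induced_povm:
  "is_linear_map (I x) \<Longrightarrow> mtrace (mmult (induced_povm I x) \<rho>) = mtrace (I x \<rho>)"
  using theI'[OF ex1_induced_povm] unfolding induced_povm_def by blast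

lemma psd_on_cong: "psd_on S Z \<Longrightarrow> (\<And>x y. x \<in> S \<Longrightarrow> y \<in> S \<Longrightarrow> Z x y = Z' x y) \<Longrightarrow> psd_on S Z'"
  unfolding psd_on_def by (metis (no_types, lifting) sum.cong)

lemma psd_on_reindex:
  assumes "bij_betw h S T" "psd_on S (\<lambda>x y. Z (h x) (h y))"
  shows "psd_on T Z"
  unfolding psd_on_def
proof
  fix v
  have "(\<Sum>i\<in>T. \<Sum>j\<in>T. cnj (v i) * Z i j * v j)
      = (\<Sum>x\<in>S. \<Sum>y\<in>S. cnj ((v \<circ> h) x) * Z (h x) (h y) * (v \<circ> h) y)"
    unfolding sum.reindex_bij_betw[OF assms(1), symmetric] by simp
  thus "Im (\<Sum>i\<in>T. \<Sum>j\<in>T. cnj (v i) * Z i j * v j) = 0 \<and> Re (\<Sum>i\<in>T. \<Sum>j\<in>T. cnj (v i) * Z i j * v j) \<ge> 0"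
    using assms(2) unfolding psd_on_def by presburger
qed

lemma psd_on_reindex_iff:
  assumes "bij_betw h S T"
  shows "psd_on S (\<lambda>x y. Z (h x) (h y)) \<longleftrightarrow> psd_on T Z"
proof
  assume "psd_on T Z"
  moreover have "bij_betw (inv_into S h) T S" by (rule bij_betw_inv_into[OF assms])
  ultimately show "psd_on S (\<lambda>x y. Z (h x) (h y))"
    by (intro psd_on_reindex[of "inv_into S h" T S]) (auto elim: psd_on_cong simp: bij_betw_inv_into_right[OF assms])
qed (rule psd_on_reindex[OF assms])

definition choi :: "(('a::finite) op \<Rightarrow> ('b::finite) op) \<Rightarrow> ('a \<times> 'b) op" where
  "choi \<Phi> = (\<lambda>(i, a) (j, b). \<Phi> (munit i j) a b)"

lemma psd_choi:
  fixes \<Phi> :: "('a::finite) op \<Rightarrow> ('b::finite) op"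
  assumes "completely_positive \<Phi>"
  shows "psd (choi \<Phi>)"
proof -
  obtain g where g: "bij_betw g {..<CARD('a)} (UNIV::'a set)"
    using ex_bij_betw_nat_finite[of "UNIV::'a set"] by (auto simp: atLeast0LessThan)
  define X :: "(nat \<times> 'a) op" where
    "X = (\<lambda>(p, a) (q, a'). (if a = g p then 1 else 0) * (if a' = g q then 1 else 0))"
  have "psd_on ({..<CARD('a)} \<times> UNIV) X"
    unfolding psd_on_def
  proof
    fix v :: "nat \<times> 'a \<Rightarrow> complex"
    define s where "s = (\<Sum>p\<in>{..<CARD('a)}. v (p, g p))"
    have "(\<Sum>y\<in>{..<CARD('a)} \<times> UNIV. X x y * v y) = (if snd x = g (fst x) then s else 0)" for x
      unfolding sum.cartesian_product' s_def X_def
      by (cases x) (auto simp: if_distrib[of "\<lambda>t. t * _"] sum.delta' cong: if_cong)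
    hence "(\<Sum>x\<in>{..<CARD('a)} \<times> UNIV. \<Sum>y\<in>{..<CARD('a)} \<times> UNIV. cnj (v x) * X x y * v y)
        = (\<Sum>x\<in>{..<CARD('a)} \<times> UNIV. cnj (v x) * (if snd x = g (fst x) then s else 0))"
      by (simp only: mult.assoc sum_distrib_left[symmetric])
    also have "\<dots> = cnj s * s"
      unfolding sum.cartesian_product' s_def
      by (simp add: sum_distrib_right if_distrib[of "\<lambda>t. _ * t"] sum.delta' cong: if_cong)
    finally show "Im (\<Sum>x\<in>{..<CARD('a)} \<times> UNIV. \<Sum>y\<in>{..<CARD('a)} \<times> UNIV. cnj (v x) * X x y * v y) = 0 \<and>
       Re (\<Sum>x\<in>{..<CARD('a)} \<times> UNIV. \<Sum>y\<in>{..<CARD('a)} \<times> UNIV. cnj (v x) * X x y * v y) \<ge> 0"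
      by simp
  qed
  hence "psd_on ({..<CARD('a)} \<times> UNIV) (ampl \<Phi> X)"
    using assms unfolding completely_positive_def by blast
  moreover have "(\<lambda>a a'. X (p, a) (q, a')) = munit (g p) (g q)" for p q
    by (auto simp: X_def munit_def)
  hence "ampl \<Phi> X = (\<lambda>x y. choi \<Phi> (map_prod g id x) (map_prod g id y))"
    unfolding ampl_def choi_def by (auto intro!: ext)
  moreover have "bij_betw (map_prod g id) ({..<CARD('a)} \<times> (UNIV::'b set)) UNIV"
    using bij_betw_map_prod[OF g bij_betw_id[of UNIV]] by simp
  ultimately show ?thesis unfolding psd_def by (metis psd_on_reindex)
qed

lemma qform_linear_map_outer:
  fixes \<Phi> :: "('a::finite) op \<Rightarrow> ('b::finite) op"
  assumes "is_linear_map \<Phi>"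
  shows "qform (\<Phi> (outer u u)) w = qform (choi \<Phi>) (\<lambda>(j, b). cnj (u j) * w b)"
proof -
  define T where "T = (\<lambda>i a j b. cnj (w a) * u i * \<Phi> (munit i j) a b * cnj (u j) * w b)"
  have "qform (\<Phi> (outer u u)) w = (\<Sum>a\<in>UNIV. \<Sum>b\<in>UNIV. \<Sum>i\<in>UNIV. \<Sum>j\<in>UNIV. T i a j b)"
    unfolding qform_def linear_map_expand[OF assms, of "outer u u"]
    by (simp only: sum_distrib_left sum_distrib_right) (simp add: T_def outer_def mult_ac)
  also have "\<dots> = (\<Sum>i\<in>UNIV. \<Sum>a\<in>UNIV. \<Sum>j\<in>UNIV. \<Sum>b\<in>UNIV. T i a j b)"
    by (subst (2) sum.swap, subst sum.swap, subst (3) sum.swap) (rule refl)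
  also have "\<dots> = qform (choi \<Phi>) (\<lambda>(j, b). cnj (u j) * w b)"
    unfolding qform_def sum_UNIV_prod by (simp add: T_def choi_def mult_ac)
  finally show ?thesis .
qed

lemma psd_induced_povm:
  assumes "is_linear_map (I x)" "completely_positive (I x)"
  shows "psd (induced_povm I x)"
  unfolding psd_iff_qform
proof
  fix u
  have "psd (I x (outer u u))"
    using psd_choi[OF assms(2)] unfolding psd_iff_qform qform_linear_map_outer[OF assms(1)] by blast
  moreover have "qform (induced_povm I x) u = mtrace (I x (outer u u))"
    by (metis mtrace_induced_povm[of I x, OF assms(1)] mtrace_mmult_outer)
  ultimately show "Im (qform (induced_povm I x) u) = 0 \<and> 0 \<le> Re (qform (induced_povm I x) u)"
    using psd_mtrace by metis
qed

section \<open>Partial traces and product operators\<close>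

definition tensor :: "'a op \<Rightarrow> 'b op \<Rightarrow> ('a \<times> 'b) op" where
  "tensor A B = (\<lambda>(a, b) (a', b'). A a a' * B b b')"

lemma mtrace_sum_op: "mtrace (\<lambda>i j. \<Sum>y\<in>F. M y i j) = (\<Sum>y\<in>F. mtrace (M y :: ('a::finite) op))"
  unfolding mtrace_def by (rule sum.swap)

lemma mtrace_scale: "mtrace (\<lambda>a b. c * A a b) = c * mtrace A"
  by (simp add: mtrace_def sum_distrib_left)

lemma mtrace_ptrace1: "mtrace (ptrace1 M) = mtrace (M :: ('k::finite \<times> 'v::finite) op)"
  by (simp add: mtrace_def ptrace1_def sum_UNIV_prod) (rule sum.swap)

lemma mtrace_ptrace2: "mtrace (ptrace2 M) = mtrace (M :: ('k::finite \<times> 'v::finite) op)"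
  by (simp add: mtrace_def ptrace2_def sum_UNIV_prod)

lemma mtrace_tensor: "mtrace (tensor A B) = mtrace A * mtrace (B :: ('v::finite) op)"
  for A :: "('k::finite) op"
  by (simp add: mtrace_def tensor_def sum_UNIV_prod sum_product)

lemma ptrace1_scaled_tensor: "ptrace1 (\<lambda>p q. c * tensor A B p q) = (\<lambda>b b'. c * mtrace A * B b b')"
  and ptrace2_scaled_tensor: "ptrace2 (\<lambda>p q. c * tensor A B p q) = (\<lambda>a a'. c * mtrace B * A a a')"
  by (simp_all add: ptrace1_def ptrace2_def tensor_def mtrace_def sum_distrib_left sum_distrib_right mult_ac)

lemma sum_quadratic_slice:
  fixes Z :: "('p \<times> 'v::finite) op"
  shows "(\<Sum>p\<in>S \<times> UNIV. \<Sum>p'\<in>S \<times> UNIV.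
            cnj ((\<lambda>(q, w). if w = v then k q else 0) p) * Z p p' * (\<lambda>(q, w). if w = v then k q else 0) p')
       = (\<Sum>q\<in>S. \<Sum>q'\<in>S. cnj (k q) * Z (q, v) (q', v) * k q')"
  unfolding sum.cartesian_product'
  by (subst (2) sum.swap)
    (simp add: if_distrib[of "\<lambda>t. _ * t"] if_distrib[of "\<lambda>t. t * _"] if_distrib[of cnj] sum.delta' cong: if_cong)

lemma qform_slice:
  fixes Z :: "('p::finite \<times> 'v::finite) op"
  shows "qform Z (\<lambda>(p, w). if w = v then k p else 0) = qform (\<lambda>p p'. Z (p, v) (p', v)) k"
  using sum_quadratic_slice[where S=UNIV] by (simp add: qform_def)

lemma psd_on_ptrace2:
  fixes X :: "('p \<times> 'k::finite) op"
  assumes "psd_on (S \<times> UNIV) X"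
  shows "psd_on S (\<lambda>q q'. \<Sum>k\<in>UNIV. X (q, k) (q', k))"
  unfolding psd_on_def
proof
  fix v :: "'p \<Rightarrow> complex"
  define Q where "Q k = (\<Sum>q\<in>S. \<Sum>q'\<in>S. cnj (v q) * X (q, k) (q', k) * v q')" for k
  have "Im (Q k) = 0 \<and> Re (Q k) \<ge> 0" for k
    using assms unfolding psd_on_def Q_def sum_quadratic_slice[symmetric] by blast
  moreover have "(\<Sum>q\<in>S. \<Sum>q'\<in>S. cnj (v q) * (\<Sum>k\<in>UNIV. X (q, k) (q', k)) * v q') = (\<Sum>k\<in>UNIV. Q k)"
    unfolding Q_def by (simp add: sum_distrib_left sum_distrib_right sum.swap[of _ UNIV] mult_ac)
  ultimately show "Im (\<Sum>q\<in>S. \<Sum>q'\<in>S. cnj (v q) * (\<Sum>k\<in>UNIV. X (q, k) (q', k)) * v q') = 0 \<and>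
      Re (\<Sum>q\<in>S. \<Sum>q'\<in>S. cnj (v q) * (\<Sum>k\<in>UNIV. X (q, k) (q', k)) * v q') \<ge> 0"
    by (simp add: Im_sum Re_sum sum_nonneg)
qed

lemma psd_on_tensor:
  fixes M :: "'p op" and W :: "('a::finite) op"
  assumes "psd_on S M" "psd W"
  shows "psd_on (S \<times> UNIV) (tensor M W)"
  unfolding psd_on_def
proof
  fix v :: "'p \<times> 'a \<Rightarrow> complex"
  define R where "R = msqrt W"
  have R: "hermitian R" "mmult R R = W"
    using assms(2) by (simp_all add: R_def psd_hermitian psd_msqrt mmult_msqrt_msqrt)
  define T where "T x y m = cnj (v x) * M (fst x) (fst y) * R (snd x) m * R m (snd y) * v y" for x y m
  define w where "w m q = (\<Sum>a\<in>UNIV. R m a * v (q, a))" for m q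
  have slice: "(\<Sum>x\<in>S \<times> UNIV. \<Sum>y\<in>S \<times> UNIV. T x y m) = (\<Sum>p\<in>S. \<Sum>q\<in>S. cnj (w m p) * M p q * w m q)" for m
  proof -
    have "(\<Sum>x\<in>S \<times> UNIV. \<Sum>y\<in>S \<times> UNIV. T x y m) = (\<Sum>p\<in>S. \<Sum>q\<in>S. \<Sum>a\<in>UNIV. \<Sum>b\<in>UNIV. T (p, a) (q, b) m)"
      unfolding sum.cartesian_product' by (rule sum.cong[OF refl sum.swap])
    thus ?thesis
      unfolding w_def T_def
      by (simp add: sum_distrib_left sum_distrib_right hermitian_cnj[OF R(1)] mult_ac)
  qed
  have "(\<Sum>x\<in>S \<times> UNIV. \<Sum>y\<in>S \<times> UNIV. cnj (v x) * tensor M W x y * v y)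
      = (\<Sum>x\<in>S \<times> UNIV. \<Sum>y\<in>S \<times> UNIV. \<Sum>m\<in>UNIV. T x y m)"
    unfolding tensor_def R(2)[symmetric] mmult_def T_def
    by (simp add: case_prod_beta sum_distrib_left sum_distrib_right mult_ac)
  also have "\<dots> = (\<Sum>m\<in>UNIV. \<Sum>x\<in>S \<times> UNIV. \<Sum>y\<in>S \<times> UNIV. T x y m)"
    by (subst sum.swap) (rule sum.cong[OF refl sum.swap])
  also have "\<dots> = (\<Sum>m\<in>UNIV. \<Sum>p\<in>S. \<Sum>q\<in>S. cnj (w m p) * M p q * w m q)"
    unfolding slice ..
  finally show "Im (\<Sum>x\<in>S \<times> UNIV. \<Sum>y\<in>S \<times> UNIV. cnj (v x) * tensor M W x y * v y) = 0 \<and>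
      Re (\<Sum>x\<in>S \<times> UNIV. \<Sum>y\<in>S \<times> UNIV. cnj (v x) * tensor M W x y * v y) \<ge> 0"
    using assms(1) unfolding psd_on_def by (simp add: Im_sum Re_sum sum_nonneg)
qed

lemma psd_tensor: "psd A \<Longrightarrow> psd B \<Longrightarrow> psd (tensor A B)"
  using psd_on_tensor[of UNIV A B] by (simp add: psd_def)

lemma is_state_tensor: "is_state A \<Longrightarrow> is_state B \<Longrightarrow> is_state (tensor A B)"
  by (simp add: is_state_def psd_tensor mtrace_tensor)

text \<open>No assumption \<open>s \<noteq> 0\<close> is needed: for \<open>s = 0\<close> both sides vanish since \<open>x / 0 = 0\<close>.\<close>
lemma annihilator_of_orth_complement:
  fixes s f :: "'p::finite \<Rightarrow> complex"
  assumes "\<And>k. cinner s k = 0 \<Longrightarrow> (\<Sum>q\<in>UNIV. f q * k q) = 0"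
  shows "f p = cnj (s p) * (\<Sum>q\<in>UNIV. f q * s q) / cinner s s"
proof (cases "s = (\<lambda>q. 0)")
  case True
  thus ?thesis using assms[of "basis_vec p"] by simp
next
  case False
  hence N: "cinner s s \<noteq> 0" using cinner_self_eq_0_iff by blast
  define k where "k = (\<lambda>q. basis_vec p q - (cnj (s p) / cinner s s) * s q)"
  have "cinner s k = 0" unfolding k_def cinner_diff_right cinner_scale_right using N by simp
  hence "(\<Sum>q\<in>UNIV. f q * k q) = 0" by (rule assms)
  moreover have "(\<Sum>q\<in>UNIV. f q * k q) = f p - cnj (s p) / cinner s s * (\<Sum>q\<in>UNIV. f q * s q)"
    unfolding k_def by (simp add: right_diff_distrib sum_subtractf sum_distrib_left mult_ac)
  ultimately show ?thesis by simp
qed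

lemma psd_family_kernel:
  fixes Z :: "'z::finite \<Rightarrow> ('p::finite \<times> 'v::finite) op"
  assumes psd: "\<And>z. psd (Z z)" and marg: "(\<lambda>p p'. \<Sum>z\<in>UNIV. ptrace2 (Z z) p p') = outer s s"
    and "cinner s k = 0"
  shows "(\<Sum>p\<in>UNIV. Z z (q, w) (p, v) * k p) = 0"
proof -
  define x where "x v0 = (\<lambda>(p, v'). if v' = v0 then k p else 0 :: complex)" for v0 :: 'v
  have nonneg: "Re (qform (Z z) (x v)) \<ge> 0" "Im (qform (Z z) (x v)) = 0" for z v
    using psd unfolding psd_iff_qform by auto
  have "(\<Sum>z\<in>UNIV. \<Sum>v\<in>UNIV. qform (Z z) (x v)) = qform (outer s s) k"
    unfolding x_def qform_slice marg[symmetric] ptrace2_def qform_sum_op ..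
  hence "(\<Sum>z\<in>UNIV. \<Sum>v\<in>UNIV. Re (qform (Z z) (x v))) = 0"
    using assms(3) by (simp add: qform_outer flip: Re_sum)
  hence "(\<Sum>v\<in>UNIV. Re (qform (Z z) (x v))) = 0"
    by (subst (asm) sum_nonneg_eq_0_iff) (auto intro: sum_nonneg nonneg)
  hence "Re (qform (Z z) (x v)) = 0"
    by (subst (asm) sum_nonneg_eq_0_iff) (auto intro: nonneg)
  hence "mvmult (Z z) (x v) = (\<lambda>i. 0)"
    using nonneg(2) psd_qform_zero_imp_kernel[OF psd] by (simp add: complex_eq_iff)
  hence "mvmult (Z z) (x v) (q, w) = 0" by simp
  thus ?thesis
    unfolding mvmult_def sum_UNIV_prod x_def
    by (simp add: if_distrib[of "\<lambda>t. _ * t"] sum.delta' cong: if_cong)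
qed

lemma psd_compress:
  fixes Z :: "('p::finite \<times> 'v::finite) op"
  assumes "psd Z"
  shows "psd (\<lambda>w v. \<Sum>q\<in>UNIV. \<Sum>p\<in>UNIV. cnj (s q) * Z (q, w) (p, v) * s p)"
proof -
  have "qform (\<lambda>w v. \<Sum>q\<in>UNIV. \<Sum>p\<in>UNIV. cnj (s q) * Z (q, w) (p, v) * s p) y
      = (\<Sum>w\<in>UNIV. \<Sum>v\<in>UNIV. \<Sum>q\<in>UNIV. \<Sum>p\<in>UNIV. cnj (s q * y w) * Z (q, w) (p, v) * (s p * y v))" for y
    unfolding qform_def by (simp add: sum_distrib_left sum_distrib_right mult_ac)
  also have "\<dots> y = qform Z (\<lambda>(p, v). s p * y v)" for y
    unfolding qform_def sum_UNIV_prod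
    by (subst (2) sum.swap, subst sum.swap, subst (3) sum.swap) simp
  finally show ?thesis using assms unfolding psd_iff_qform by presburger
qed

lemma psd_family_factor:
  fixes Z :: "'z::finite \<Rightarrow> ('p::finite \<times> 'v::finite) op"
  assumes psd: "\<And>z. psd (Z z)" and marg: "(\<lambda>p p'. \<Sum>z\<in>UNIV. ptrace2 (Z z) p p') = outer s s"
  shows "\<exists>\<omega>. psd \<omega> \<and> Z z = tensor (outer s s) \<omega>"
proof -
  define N where "N = cinner s s"
  have N_real: "cnj N = N" unfolding N_def by (metis cinner_self_eq_Re complex_cnj_complex_of_real)
  have right: "Z z (q, w) (p, v) = cnj (s p) * (\<Sum>p'\<in>UNIV. Z z (q, w) (p', v) * s p') / N" for q w p v
    unfolding N_def by (rule annihilator_of_orth_complement) (rule psd_family_kernel[OF psd marg])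
  have left: "Z z (q, w) (p, v) = s q * (\<Sum>q'\<in>UNIV. cnj (s q') * Z z (q', w) (p, v)) / N" for q w p v
  proof -
    have "Z z (q, w) (p, v) = cnj (Z z (p, v) (q, w))"
      using psd_hermitian[OF psd] unfolding hermitian_def by blast
    also have "\<dots> = s q * (\<Sum>q'\<in>UNIV. cnj (Z z (p, v) (q', w)) * cnj (s q')) / cnj N"
      by (subst right) simp
    also have "\<dots> = s q * (\<Sum>q'\<in>UNIV. cnj (s q') * Z z (q', w) (p, v)) / N"
      using psd_hermitian[OF psd] by (simp add: N_real hermitian_cnj mult.commute del: complex_cnj_cnj)
    finally show ?thesis .
  qed
  define \<omega> where "\<omega> = (\<lambda>w v. of_real (1 / (Re N)\<^sup>2) * (\<Sum>q\<in>UNIV. \<Sum>p\<in>UNIV. cnj (s q) * Z z (q, w) (p, v) * s p))"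
  have "psd \<omega>" unfolding \<omega>_def by (intro psd_scale psd_compress psd) simp
  moreover have "Z z = tensor (outer s s) \<omega>"
  proof (intro ext, clarify)
    fix q w p v
    have "Z z (q, w) (p, v) = cnj (s p) * (\<Sum>p'\<in>UNIV. s q * (\<Sum>q'\<in>UNIV. cnj (s q') * Z z (q', w) (p', v)) / N * s p') / N"
      by (subst right) (subst left, rule refl)
    also have "\<dots> = s q * cnj (s p) * (\<Sum>q'\<in>UNIV. \<Sum>p'\<in>UNIV. cnj (s q') * Z z (q', w) (p', v) * s p') / (N * N)"
      by (subst sum.swap) (simp add: sum_distrib_left sum_distrib_right sum_divide_distrib mult_ac)
    also have "N * N = of_real ((Re N)\<^sup>2)"
      by (metis N_def cinner_self_eq_Re of_real_mult power2_eq_square)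
    finally show "Z z (q, w) (p, v) = tensor (outer s s) \<omega> (q, w) (p, v)"
      by (simp add: tensor_def outer_def \<omega>_def divide_inverse mult_ac)
  qed
  ultimately show ?thesis by blast
qed

section \<open>Exchanging the two outputs\<close>

definition swap_op :: "('a \<times> 'b) op \<Rightarrow> ('b \<times> 'a) op" where
  "swap_op M = (\<lambda>(b, a) (b', a'). M (a, b) (a', b'))"

lemma ptrace2_swap_op: "ptrace2 (swap_op M) = ptrace1 M"
  and ptrace1_swap_op: "ptrace1 (swap_op M) = ptrace2 M"
  by (simp_all add: ptrace1_def ptrace2_def swap_op_def)

lemma mtrace_swap_op: "mtrace (swap_op M) = mtrace (M :: ('a::finite \<times> 'b::finite) op)"
  by (simp add: mtrace_def swap_op_def sum_UNIV_prod) (rule sum.swap)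

lemma linear_map_swap_op: "is_linear_map \<Phi> \<Longrightarrow> is_linear_map (\<lambda>\<rho>. swap_op (\<Phi> \<rho>))"
  unfolding is_linear_map_def swap_op_def by (auto simp: fun_eq_iff)

lemma completely_positive_swap_op:
  assumes "completely_positive \<Phi>"
  shows "completely_positive (\<lambda>\<rho>. swap_op (\<Phi> \<rho>))"
  unfolding completely_positive_def
proof (intro allI impI)
  fix n :: nat and X :: "(nat \<times> 'a) op"
  assume "psd_on ({..<n} \<times> UNIV) X"
  hence "psd_on ({..<n} \<times> UNIV) (ampl \<Phi> X)" using assms unfolding completely_positive_def by blast
  moreover have bij: "bij_betw (map_prod id prod.swap) ({..<n} \<times> UNIV) ({..<n} \<times> UNIV)"
    using bij_betw_map_prod[OF bij_betw_id[of "{..<n}"] bij_swap] by simp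
  moreover have "ampl (\<lambda>\<rho>. swap_op (\<Phi> \<rho>)) X = (\<lambda>x y. ampl \<Phi> X (map_prod id prod.swap x) (map_prod id prod.swap y))"
    by (auto simp: ampl_def swap_op_def intro!: ext)
  ultimately show "psd_on ({..<n} \<times> UNIV) (ampl (\<lambda>\<rho>. swap_op (\<Phi> \<rho>)) X)"
    by (simp add: psd_on_reindex_iff[OF bij])
qed

lemma instrument_swap:
  assumes "instrument G"
  shows "instrument (\<lambda>p \<rho>. swap_op (G (snd p, fst p) \<rho>))"
proof -
  have "(\<Sum>p\<in>UNIV. mtrace (G (snd p, fst p) \<rho>)) = (\<Sum>p\<in>UNIV. mtrace (G p \<rho>))" for \<rho>
    by (simp add: sum_UNIV_prod) (rule sum.swap)
  thus ?thesis
    using assms unfolding instrument_def trace_nonincreasing_def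
    by (simp add: linear_map_swap_op completely_positive_swap_op mtrace_swap_op mtrace_sum_op)
qed

lemma compatible_sym:
  assumes "compatible I J" shows "compatible J I"
proof -
  obtain G where "instrument G"
    and "\<forall>\<rho>. is_state \<rho> \<longrightarrow> (\<forall>y. (\<lambda>i j. \<Sum>x\<in>UNIV. ptrace1 (G (x, y) \<rho>) i j) = J y \<rho>) \<and>
                         (\<forall>x. (\<lambda>i j. \<Sum>y\<in>UNIV. ptrace2 (G (x, y) \<rho>) i j) = I x \<rho>)"
    using assms unfolding compatible_def by blast
  thus ?thesis unfolding compatible_def
    by (intro exI[of _ "\<lambda>p \<rho>. swap_op (G (snd p, fst p) \<rho>)"])
      (simp add: instrument_swap ptrace1_swap_op ptrace2_swap_op)
qed

section \<open>Lueders instruments\<close>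

lemma linear_map_sandwich: "is_linear_map (\<lambda>\<rho>. mmult (mmult S \<rho>) S)"
  unfolding is_linear_map_def mmult_def by (auto simp: algebra_simps sum.distrib sum_distrib_left intro!: ext)

lemma sandwich_munit: "mmult (mmult S (munit i j)) S a a' = S a i * S j a'"
proof -
  have "mmult S (munit i j) a k = (if k = j then S a i else 0)" for k
    by (cases "k = j") (simp_all add: mmult_def munit_def if_distrib[of "\<lambda>x. _ * x"] cong: if_cong)
  thus ?thesis by (simp add: mmult_def[of "mmult S (munit i j)"] if_distrib[of "\<lambda>x. x * _"] cong: if_cong)
qed

lemma mtrace_sandwich: "mtrace (mmult (mmult S \<rho>) S) = mtrace (mmult (mmult S S) (\<rho>::('a::finite) op))"
proof -
  have "mtrace (mmult (mmult S \<rho>) S) = (\<Sum>a\<in>UNIV. \<Sum>k\<in>UNIV. \<Sum>m\<in>UNIV. S a m * \<rho> m k * S k a)"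
    unfolding mtrace_def mmult_def by (simp add: sum_distrib_right)
  also have "\<dots> = (\<Sum>k\<in>UNIV. \<Sum>m\<in>UNIV. \<Sum>a\<in>UNIV. S k a * S a m * \<rho> m k)"
    by (subst sum.swap, rule sum.cong[OF refl], subst sum.swap) (simp add: mult_ac)
  also have "\<dots> = mtrace (mmult (mmult S S) \<rho>)"
    unfolding mtrace_def mmult_def by (simp add: sum_distrib_right)
  finally show ?thesis .
qed

lemma linear_map_sum_ptrace2:
  assumes "\<And>y. is_linear_map (G y)"
  shows "is_linear_map (\<lambda>\<rho>. \<lambda>i j. \<Sum>y\<in>UNIV. ptrace2 (G y \<rho>) i j)"
  using assms unfolding is_linear_map_def ptrace2_def by (simp add: sum.distrib sum_distrib_left)

text \<open>The marginal has the single Kraus operator \<open>S\<close>, so the Choi matrices of the \<open>G y\<close>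
  have rank-one summed partial trace and \<open>psd_family_factor\<close> applies.\<close>

lemma lueders_marginal_factor:
  fixes G :: "'y::finite \<Rightarrow> ('h::finite) op \<Rightarrow> ('h \<times> 'v::finite) op"
  assumes lin: "\<And>y. is_linear_map (G y)" and cp: "\<And>y. completely_positive (G y)" and "hermitian S"
    and marg: "\<And>\<rho>. is_state \<rho> \<Longrightarrow> (\<lambda>a a'. \<Sum>y\<in>UNIV. ptrace2 (G y \<rho>) a a') = mmult (mmult S \<rho>) S"
  shows "\<exists>\<omega>. (\<forall>y. psd (\<omega> y) \<and> (\<forall>i j a b a' b'. G y (munit i j) (a, b) (a', b') = S a i * cnj (S a' j) * \<omega> y b b'))
    \<and> ((\<Sum>y\<in>UNIV. mtrace (\<omega> y)) = 1 \<or> S = (\<lambda>a i. 0))"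
proof -
  have marg_munit: "(\<Sum>y\<in>UNIV. ptrace2 (G y (munit i j)) a a') = S a i * cnj (S a' j)" for i j a a'
  proof -
    have "(\<lambda>\<rho>. \<lambda>a a'. \<Sum>y\<in>UNIV. ptrace2 (G y \<rho>) a a') = (\<lambda>\<rho>. mmult (mmult S \<rho>) S)"
      by (rule linear_map_eq_on_states[OF linear_map_sum_ptrace2[OF lin] linear_map_sandwich marg])
    thus ?thesis using hermitian_cnj[OF \<open>hermitian S\<close>] by (simp add: fun_eq_iff sandwich_munit)
  qed
  define h :: "('h \<times> 'h) \<times> 'v \<Rightarrow> 'h \<times> ('h \<times> 'v)" where "h = (\<lambda>((i, a), b). (i, (a, b)))"
  have "bij h" unfolding h_def by (rule bij_betwI[of _ _ _ "\<lambda>(i, (a, b)). ((i, a), b)"]) auto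
  define Z where "Z y = (\<lambda>p q. choi (G y) (h p) (h q))" for y
  define s where "s = (\<lambda>(i, a). S a i)"
  have "psd (Z y)" for y
    using psd_choi[OF cp] psd_on_reindex_iff[OF \<open>bij h\<close>] unfolding psd_def Z_def by blast
  moreover have "(\<lambda>p p'. \<Sum>y\<in>UNIV. ptrace2 (Z y) p p') = outer s s"
    using marg_munit by (auto simp: Z_def h_def s_def choi_def ptrace2_def outer_def intro!: ext)
  ultimately have "\<forall>y. \<exists>\<omega>. psd \<omega> \<and> Z y = tensor (outer s s) \<omega>"
    using psd_family_factor by blast
  then obtain \<omega> where \<omega>: "\<And>y. psd (\<omega> y)" "\<And>y. Z y = tensor (outer s s) (\<omega> y)"
    by metis
  have factor: "G y (munit i j) (a, b) (a', b') = S a i * cnj (S a' j) * \<omega> y b b'" for y i j a b a' b'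
    using \<omega>(2)[of y] unfolding fun_eq_iff by (simp add: Z_def h_def s_def choi_def tensor_def outer_def)
  have "(\<Sum>y\<in>UNIV. mtrace (\<omega> y)) = 1" if "S a i \<noteq> 0" for a i
  proof -
    have "(\<Sum>y\<in>UNIV. mtrace (\<omega> y)) * (S a i * cnj (S a i)) = S a i * cnj (S a i)"
      using marg_munit[of i i a a] by (simp add: ptrace2_def factor mtrace_def sum_distrib_left sum_distrib_right mult_ac)
    thus ?thesis using that by simp
  qed
  thus ?thesis using \<omega>(1) factor by blast
qed

lemma lueders_marginal_factor_ptrace1:
  fixes G :: "'y::finite \<Rightarrow> ('h::finite) op \<Rightarrow> ('v::finite \<times> 'h) op"
  assumes "\<And>y. is_linear_map (G y)" "\<And>y. completely_positive (G y)" "hermitian T"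
    and "\<And>\<rho>. is_state \<rho> \<Longrightarrow> (\<lambda>b b'. \<Sum>y\<in>UNIV. ptrace1 (G y \<rho>) b b') = mmult (mmult T \<rho>) T"
  shows "\<exists>\<omega>. \<forall>y. psd (\<omega> y) \<and>
    (\<forall>i j a b a' b'. G y (munit i j) (a, b) (a', b') = T b i * cnj (T b' j) * \<omega> y a a')"
proof -
  have "\<exists>\<omega>. \<forall>y. psd (\<omega> y) \<and>
      (\<forall>i j b a b' a'. swap_op (G y (munit i j)) (b, a) (b', a') = T b i * cnj (T b' j) * \<omega> y a a')"
    using lueders_marginal_factor[of "\<lambda>y \<rho>. swap_op (G y \<rho>)" T] assms
    by (simp add: linear_map_swap_op completely_positive_swap_op ptrace2_swap_op) blast
  thus ?thesis by (simp add: swap_op_def) blast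
qed

lemma mmult_self_rank_one:
  fixes S W :: "('h::finite) op"
  assumes "hermitian S" and "\<And>i. \<exists>c\<ge>0. \<forall>a a'. S a i * cnj (S a' i) = of_real c * W a a'"
  shows "\<exists>\<alpha>. mmult S S = outer \<alpha> \<alpha>"
proof -
  obtain c where c: "\<And>i. c i \<ge> 0" "\<And>i a a'. S a i * cnj (S a' i) = of_real (c i) * W a a'"
    using assms(2) by metis
  have "mmult S S a a' = (\<Sum>i\<in>UNIV. S a i * cnj (S a' i))" for a a'
    by (simp add: mmult_def hermitian_cnj[OF assms(1)])
  hence SS: "mmult S S a a' = of_real (\<Sum>i\<in>UNIV. c i) * W a a'" for a a'
    by (simp add: c(2) sum_distrib_right)
  show ?thesis
  proof (cases "\<exists>i. c i > 0")
    case True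
    then obtain i where i: "c i > 0" by blast
    define q where "q = (\<Sum>i\<in>UNIV. c i) / c i"
    define \<alpha> where "\<alpha> a = of_real (sqrt q) * S a i" for a
    have "q \<ge> 0" using c(1) i by (simp add: q_def sum_nonneg)
    hence sqrt_q: "of_real (sqrt q) * of_real (sqrt q) = (of_real q :: complex)"
      by (simp flip: of_real_mult)
    have "mmult S S a a' = of_real q * (S a i * cnj (S a' i))" for a a'
      unfolding SS c(2) using i by (simp add: q_def)
    hence "mmult S S a a' = outer \<alpha> \<alpha> a a'" for a a'
      by (simp add: outer_def \<alpha>_def sqrt_q[symmetric] mult_ac)
    thus ?thesis by blast
  next
    case False
    hence "c i = 0" for i using c(1) by (meson linorder_neqE_linordered_idom not_less)
    hence "mmult S S = outer (\<lambda>a. 0) (\<lambda>a. 0)" by (simp add: SS outer_def fun_eq_iff)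
    thus ?thesis by blast
  qed
qed

text \<open>Comparing the diagonal blocks of the two product forms of the Choi matrix of
  \<open>G (x, y)\<close> shows that all outer products of columns of \<open>S\<close> are multiples of one matrix.\<close>

lemma rank_one_of_lueders_marginals:
  fixes G :: "'x::finite \<times> 'y::finite \<Rightarrow> ('h::finite) op \<Rightarrow> ('h \<times> 'h) op"
  assumes lin: "\<And>p. is_linear_map (G p)" and cp: "\<And>p. completely_positive (G p)"
    and "hermitian S" "\<And>y. hermitian (T y)"
    and margS: "\<And>\<rho>. is_state \<rho> \<Longrightarrow> (\<lambda>a a'. \<Sum>y\<in>UNIV. ptrace2 (G (x, y) \<rho>) a a') = mmult (mmult S \<rho>) S"
    and margT: "\<And>\<rho> y. is_state \<rho> \<Longrightarrow>
      (\<lambda>b b'. \<Sum>x\<in>UNIV. ptrace1 (G (x, y) \<rho>) b b') = mmult (mmult (T y) \<rho>) (T y)"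
  shows "\<exists>\<alpha>. mmult S S = outer \<alpha> \<alpha>"
proof (cases "S = (\<lambda>a i. 0)")
  case True
  thus ?thesis by (auto simp: mmult_def outer_def fun_eq_iff)
next
  case False
  obtain \<omega> where \<omega>: "\<And>y. psd (\<omega> y)"
      "\<And>y i j a b a' b'. G (x, y) (munit i j) (a, b) (a', b') = S a i * cnj (S a' j) * \<omega> y b b'"
    and "(\<Sum>y\<in>UNIV. mtrace (\<omega> y)) = 1"
    using lueders_marginal_factor[of "\<lambda>y. G (x, y)", OF lin cp assms(3) margS] False by blast
  then obtain y where "mtrace (\<omega> y) \<noteq> 0" by (metis sum.neutral zero_neq_one)
  then obtain b where "\<omega> y b b \<noteq> 0" unfolding mtrace_def by (meson sum.neutral)
  define r where "r = Re (\<omega> y b b)"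
  have r: "r > 0" "\<omega> y b b = of_real r"
    using psd_diag[OF \<omega>(1)] \<open>\<omega> y b b \<noteq> 0\<close> by (auto simp: r_def complex_eq_iff less_le)
  obtain W where W: "\<And>i j a b a' b'. G (x, y) (munit i j) (a, b) (a', b') = T y b i * cnj (T y b' j) * W a a'"
    using lueders_marginal_factor_ptrace1[of "\<lambda>x. G (x, y)", OF lin cp assms(4) margT] by blast
  have "\<exists>c\<ge>0. \<forall>a a'. S a i * cnj (S a' i) = of_real c * W a a'" for i
  proof (intro exI conjI allI)
    fix a a'
    have "S a i * cnj (S a' i) * of_real r = of_real ((cmod (T y b i))\<^sup>2) * W a a'"
      using \<omega>(2)[of y i i a b a' b] W[of i i a b a' b] r(2) complex_norm_square[of "T y b i"] by simp
    thus "S a i * cnj (S a' i) = of_real ((cmod (T y b i))\<^sup>2 / r) * W a a'"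
      using r(1) by (simp add: eq_divide_eq divide_simps)
  qed (use r in simp)
  thus ?thesis using mmult_self_rank_one[OF assms(3)] by blast
qed

lemma lueders_compatible_rank_one:
  fixes I :: "('x::finite) \<Rightarrow> ('h::finite) op \<Rightarrow> ('k::finite) op"
    and J :: "('y::finite) \<Rightarrow> 'h op \<Rightarrow> ('v::finite) op"
  assumes "instrument I" "instrument J"
    and "compatible (lueders (induced_povm I)) (lueders (induced_povm J))"
  shows "\<exists>\<alpha>. induced_povm I x = outer \<alpha> \<alpha>"
proof -
  define S where "S = msqrt (induced_povm I x)"
  define T where "T y = msqrt (induced_povm J y)" for y
  have "psd (induced_povm I x)" "psd (induced_povm J y)" for y
    using assms(1,2) by (simp_all add: instrument_def psd_induced_povm)
  hence S: "hermitian S" "mmult S S = induced_povm I x" and T: "hermitian (T y)" for y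
    by (simp_all add: S_def T_def psd_hermitian psd_msqrt mmult_msqrt_msqrt)
  obtain G where G: "\<And>p. is_linear_map (G p)" "\<And>p. completely_positive (G p)"
    and margS: "\<And>\<rho>. is_state \<rho> \<Longrightarrow> (\<lambda>a a'. \<Sum>y\<in>UNIV. ptrace2 (G (x, y) \<rho>) a a') = mmult (mmult S \<rho>) S"
    and margT: "\<And>\<rho> y. is_state \<rho> \<Longrightarrow>
      (\<lambda>b b'. \<Sum>x\<in>UNIV. ptrace1 (G (x, y) \<rho>) b b') = mmult (mmult (T y) \<rho>) (T y)"
    using assms(3) unfolding compatible_def instrument_def lueders_def S_def T_def by blast
  show ?thesis using rank_one_of_lueders_marginals[OF G S(1) T margS margT] S(2) by simp
qed

lemma mtrace_lueders_induced_povm: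
  assumes "instrument I" shows "mtrace (lueders (induced_povm I) x \<rho>) = mtrace (I x \<rho>)"
proof -
  have "is_linear_map (I x)" "completely_positive (I x)" using assms by (simp_all add: instrument_def)
  thus ?thesis
    unfolding lueders_def by (subst mtrace_sandwich) (simp add: mmult_msqrt_msqrt psd_induced_povm mtrace_induced_povm)
qed

section \<open>Measure-and-prepare instruments\<close>

lemma measure_prepare_of_rank_one_effect:
  fixes \<Phi> :: "('a::finite) op \<Rightarrow> ('b::finite) op"
  assumes lin: "is_linear_map \<Phi>" and cp: "completely_positive \<Phi>"
    and effect: "\<And>\<rho>. mtrace (\<Phi> \<rho>) = mtrace (mmult (outer \<alpha> \<alpha>) \<rho>)"
  shows "\<exists>\<sigma>. is_state \<sigma> \<and> (\<forall>\<rho>. \<Phi> \<rho> = (\<lambda>a b. mtrace (\<Phi> \<rho>) * \<sigma> a b))"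
proof -
  define s where "s i = cnj (\<alpha> i)" for i
  have "(\<lambda>p p'. \<Sum>z\<in>(UNIV::unit set). ptrace2 (choi \<Phi>) p p') = outer s s"
    using effect[of "munit _ _"]
    by (auto simp: ptrace2_def choi_def mtrace_mmult_munit outer_def s_def mult.commute intro!: ext)
      (simp add: mtrace_def)
  then obtain \<omega> where "psd \<omega>" and "choi \<Phi> = tensor (outer s s) \<omega>"
    using psd_family_factor[of "\<lambda>_::unit. choi \<Phi>"] psd_choi[OF cp] by blast
  hence munit: "\<Phi> (munit i j) a b = cnj (\<alpha> i) * \<alpha> j * \<omega> a b" for i j a b
    unfolding fun_eq_iff by (simp add: choi_def tensor_def outer_def s_def)
  have "mtrace (mmult (outer \<alpha> \<alpha>) \<rho>) = (\<Sum>i\<in>UNIV. \<Sum>j\<in>UNIV. \<rho> i j * (cnj (\<alpha> i) * \<alpha> j))" for \<rho>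
    unfolding mtrace_def mmult_def outer_def by (subst sum.swap) (simp add: mult_ac)
  hence "\<Phi> \<rho> = (\<lambda>a b. mtrace (mmult (outer \<alpha> \<alpha>) \<rho>) * \<omega> a b)" for \<rho>
    unfolding linear_map_expand[OF lin, of \<rho>] munit by (simp add: sum_distrib_left mult_ac)
  hence \<Phi>: "\<Phi> \<rho> = (\<lambda>a b. mtrace (\<Phi> \<rho>) * \<omega> a b)" for \<rho>
    unfolding effect .
  show ?thesis
  proof (cases "\<exists>\<rho>. mtrace (\<Phi> \<rho>) \<noteq> 0")
    case True
    then obtain \<rho> where "mtrace (\<Phi> \<rho>) \<noteq> 0" by blast
    moreover have "mtrace (\<Phi> \<rho>) = mtrace (\<Phi> \<rho>) * mtrace \<omega>"
      by (subst (1) \<Phi>) (simp add: mtrace_def sum_distrib_left)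
    ultimately have "is_state \<omega>" using \<open>psd \<omega>\<close> by (simp add: is_state_def)
    thus ?thesis using \<Phi> by blast
  next
    case False
    thus ?thesis using \<Phi> is_state_munit by fastforce
  qed
qed

lemma instrument_measure_prepare:
  assumes "instrument I" "\<And>x. \<exists>\<alpha>. induced_povm I x = outer \<alpha> \<alpha>"
  shows "\<exists>\<sigma>. \<forall>x. is_state (\<sigma> x) \<and> (\<forall>\<rho>. I x \<rho> = (\<lambda>a b. mtrace (I x \<rho>) * \<sigma> x a b))"
proof -
  have "\<exists>\<sigma>. is_state \<sigma> \<and> (\<forall>\<rho>. I x \<rho> = (\<lambda>a b. mtrace (I x \<rho>) * \<sigma> a b))" for x
  proof -
    obtain \<alpha> where "induced_povm I x = outer \<alpha> \<alpha>" using assms(2) by blast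
    moreover have "is_linear_map (I x)" "completely_positive (I x)"
      using assms(1) by (simp_all add: instrument_def)
    ultimately show ?thesis
      using measure_prepare_of_rank_one_effect mtrace_induced_povm[of I x] by metis
  qed
  thus ?thesis by metis
qed

lemma completely_positive_trace_and_prepare:
  fixes \<Phi> :: "('a::finite) op \<Rightarrow> ('b::finite) op" and \<omega> :: "('c::finite) op"
  assumes "completely_positive \<Phi>" "psd \<omega>"
  shows "completely_positive (\<lambda>\<rho>. \<lambda>a b. mtrace (\<Phi> \<rho>) * \<omega> a b)"
  unfolding completely_positive_def
proof (intro allI impI)
  fix n :: nat and X :: "(nat \<times> 'a) op"
  assume "psd_on ({..<n} \<times> UNIV) X"
  hence "psd_on ({..<n} \<times> UNIV) (ampl \<Phi> X)" using assms(1) unfolding completely_positive_def by blast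
  hence "psd_on {..<n} (\<lambda>q q'. \<Sum>k\<in>UNIV. ampl \<Phi> X (q, k) (q', k))" by (rule psd_on_ptrace2)
  hence "psd_on ({..<n} \<times> UNIV) (tensor (\<lambda>q q'. \<Sum>k\<in>UNIV. ampl \<Phi> X (q, k) (q', k)) \<omega>)"
    using assms(2) by (rule psd_on_tensor)
  moreover have "tensor (\<lambda>q q'. \<Sum>k\<in>UNIV. ampl \<Phi> X (q, k) (q', k)) \<omega> = ampl (\<lambda>\<rho> a b. mtrace (\<Phi> \<rho>) * \<omega> a b) X"
    by (auto simp: tensor_def ampl_def mtrace_def intro!: ext)
  ultimately show "psd_on ({..<n} \<times> UNIV) (ampl (\<lambda>\<rho> a b. mtrace (\<Phi> \<rho>) * \<omega> a b) X)" by simp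
qed

lemma instrument_trace_and_prepare:
  assumes "instrument G" "\<And>p. is_state (\<omega> p)"
  shows "instrument (\<lambda>p \<rho>. \<lambda>a b. mtrace (G p \<rho>) * \<omega> p a b)"
proof -
  have "is_linear_map (\<lambda>\<rho> a b. mtrace (G p \<rho>) * \<omega> p a b)" for p
    using assms(1) unfolding instrument_def is_linear_map_def
    by (simp add: mtrace_def sum.distrib sum_distrib_left algebra_simps)
  moreover have "mtrace (\<lambda>a b. mtrace (G p \<rho>) * \<omega> p a b) = mtrace (G p \<rho>)" for p \<rho>
    using assms(2)[of p] by (simp add: mtrace_scale is_state_def)
  ultimately show ?thesis
    using assms(1) assms(2)[unfolded is_state_def]
    by (simp add: instrument_def trace_nonincreasing_def completely_positive_trace_and_prepare mtrace_sum_op)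
qed

text \<open>The joint instrument measures the joint POVM of \<open>I'\<close> and \<open>J'\<close> and prepares the
  product of the two output states.\<close>

lemma compatible_measure_prepare:
  fixes I :: "('x::finite) \<Rightarrow> ('h::finite) op \<Rightarrow> ('k::finite) op"
    and J :: "('y::finite) \<Rightarrow> 'h op \<Rightarrow> ('v::finite) op"
    and I' :: "'x \<Rightarrow> 'h op \<Rightarrow> ('k'::finite) op" and J' :: "'y \<Rightarrow> 'h op \<Rightarrow> ('v'::finite) op"
  assumes "compatible I' J'"
    and trI: "\<And>x \<rho>. mtrace (I' x \<rho>) = mtrace (I x \<rho>)" and trJ: "\<And>y \<rho>. mtrace (J' y \<rho>) = mtrace (J y \<rho>)"
    and \<sigma>: "\<forall>x. is_state (\<sigma> x) \<and> (\<forall>\<rho>. I x \<rho> = (\<lambda>a b. mtrace (I x \<rho>) * \<sigma> x a b))"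
    and \<tau>: "\<forall>y. is_state (\<tau> y) \<and> (\<forall>\<rho>. J y \<rho> = (\<lambda>a b. mtrace (J y \<rho>) * \<tau> y a b))"
  shows "compatible I J"
proof -
  obtain G' where G': "instrument G'"
    and marg: "\<And>\<rho>. is_state \<rho> \<Longrightarrow> (\<forall>y. (\<lambda>i j. \<Sum>x\<in>UNIV. ptrace1 (G' (x, y) \<rho>) i j) = J' y \<rho>) \<and>
                         (\<forall>x. (\<lambda>i j. \<Sum>y\<in>UNIV. ptrace2 (G' (x, y) \<rho>) i j) = I' x \<rho>)"
    using assms(1) unfolding compatible_def by blast
  define G where "G p \<rho> = (\<lambda>a b. mtrace (G' p \<rho>) * tensor (\<sigma> (fst p)) (\<tau> (snd p)) a b)" for p \<rho>
  have tr: "mtrace (\<sigma> x) = 1" "mtrace (\<tau> y) = 1" for x y using \<sigma> \<tau> by (simp_all add: is_state_def)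
  have "instrument G"
    unfolding G_def using \<sigma> \<tau> by (intro instrument_trace_and_prepare[OF G'] is_state_tensor) simp_all
  moreover have "(\<lambda>i j. \<Sum>x\<in>UNIV. ptrace1 (G (x, y) \<rho>) i j) = J y \<rho>" if "is_state \<rho>" for y \<rho>
  proof -
    have "(\<Sum>x\<in>UNIV. mtrace (G' (x, y) \<rho>)) = mtrace (J' y \<rho>)"
      using marg[OF that] by (simp flip: mtrace_ptrace1 mtrace_sum_op)
    hence "(\<lambda>i j. \<Sum>x\<in>UNIV. ptrace1 (G (x, y) \<rho>) i j) = (\<lambda>i j. mtrace (J y \<rho>) * \<tau> y i j)"
      by (simp add: G_def ptrace1_scaled_tensor tr trJ flip: sum_distrib_right)
    thus ?thesis using \<tau> by metis
  qed
  moreover have "(\<lambda>i j. \<Sum>y\<in>UNIV. ptrace2 (G (x, y) \<rho>) i j) = I x \<rho>" if "is_state \<rho>" for x \<rho>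
  proof -
    have "(\<Sum>y\<in>UNIV. mtrace (G' (x, y) \<rho>)) = mtrace (I' x \<rho>)"
      using marg[OF that] by (simp flip: mtrace_ptrace2 mtrace_sum_op)
    hence "(\<lambda>i j. \<Sum>y\<in>UNIV. ptrace2 (G (x, y) \<rho>) i j) = (\<lambda>i j. mtrace (I x \<rho>) * \<sigma> x i j)"
      by (simp add: G_def ptrace2_scaled_tensor tr trI flip: sum_distrib_right)
    thus ?thesis using \<sigma> by metis
  qed
  ultimately show ?thesis unfolding compatible_def by blast
qed

theorem proposition2:
  fixes I :: "('x::finite) \<Rightarrow> ('h::finite) op \<Rightarrow> ('k::finite) op"
    and J :: "('y::finite) \<Rightarrow> 'h op \<Rightarrow> ('v::finite) op"
  assumes "instrument I" and "instrument J"
    and "compatible (lueders (induced_povm I)) (lueders (induced_povm J))"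
  shows "compatible I J"
proof -
  obtain \<sigma> where "\<forall>x. is_state (\<sigma> x) \<and> (\<forall>\<rho>. I x \<rho> = (\<lambda>a b. mtrace (I x \<rho>) * \<sigma> x a b))"
    using instrument_measure_prepare[OF assms(1) lueders_compatible_rank_one[OF assms]] by blast
  moreover obtain \<tau> where "\<forall>y. is_state (\<tau> y) \<and> (\<forall>\<rho>. J y \<rho> = (\<lambda>a b. mtrace (J y \<rho>) * \<tau> y a b))"
    using instrument_measure_prepare[OF assms(2) lueders_compatible_rank_one[OF assms(2,1) compatible_sym[OF assms(3)]]]
    by blast
  ultimately show ?thesis
    by (rule compatible_measure_prepare[OF assms(3) mtrace_lueders_induced_povm[OF assms(1)]
          mtrace_lueders_induced_povm[OF assms(2)]])
qed

end
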